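(* Consider the GTFG system with $\lambda=0$ (setting below) and the invariant set $\mathcal M_2$, the closure in $\mathcal P^6$ of the set of points with $x_1x_2\ne0$ satisfying $F=0$, $F_1=0$, with partial integrals $\mathsf M$ and $L$ (defined below). Then the outer type of the points of $\mathcal M_2$ is as follows: if $\mathsf M=\varepsilon_1^2$ or $L=0$, the points are degenerate; if $L\neq0$, then all points with $\mathsf M>\varepsilon_1^2$ have outer type "center" and all points with $\mathsf M<\varepsilon_1^2$ have outer type "saddle". (Precisely, $C_\Phi=-4r^4(\mathsf M-\varepsilon_1^2)L^2$.)
   Context: Phase variables $\mathbf M,\boldsymbol\alpha,\boldsymbol\beta\in\mathbb R^3$ on $e(3,2)^*\cong\mathbb R^9$ with Lie–Poisson dynamics: a function $\Phi$ generates $\mathrm{sgrad}\,\Phi$: $\dot{\mathbf M}=\mathbf M\times\partial\Phi/\partial\mathbf M+\boldsymbol\alpha\times\partial\Phi/\partial\boldsymbol\alpha+\boldsymbol\beta\times\partial\Phi/\partial\boldsymbol\beta$, $\dot{\boldsymbol\alpha}=\boldsymbol\alpha\times\partial\Phi/\partial\mathbf M$, $\dot{\boldsymbol\beta}=\boldsymbol\beta\times\partial\Phi/\partial\mathbf M$. Constants $a>b>0$, $p^2=a^2+b^2$, $r^2=a^2-b^2$; phase space $\mathcal P^6=\{\boldsymbol\alpha^2=a^2,\boldsymbol\beta^2=b^2,\boldsymbol\alpha\cdot\boldsymbol\beta=0\}$. Real parameters $\varepsilon_0\ge0,\varepsilon_1,\lambda$. GTFG Hamiltonian $H=\tfrac14(M_1^2+M_2^2)+\tfrac12(M_3-\lambda)^2-\varepsilon_1[(\alpha_2M_3-\alpha_3M_2)+(\beta_3M_1-\beta_1M_3)]-\varepsilon_0(\alpha_1+\beta_2)$,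 with further first integrals $K,G$: $K=\big[\tfrac14(M_1^2-M_2^2)+\varepsilon_0(\alpha_1-\beta_2)+\varepsilon_1\big((\boldsymbol\alpha\times\mathbf M)\cdot\mathbf e_1-(\boldsymbol\beta\times\mathbf M)\cdot\mathbf e_2-\varepsilon_1(\boldsymbol\alpha^2-\boldsymbol\beta^2)\big)\big]^2+\big[\tfrac12M_1M_2+\varepsilon_0(\alpha_2+\beta_1)+\varepsilon_1\big((\boldsymbol\alpha\times\mathbf M)\cdot\mathbf e_2+(\boldsymbol\beta\times\mathbf M)\cdot\mathbf e_1-2\varepsilon_1\boldsymbol\alpha\cdot\boldsymbol\beta\big)\big]^2$ (for $\lambda=0$), $G=\tfrac14[(\mathbf M\cdot\boldsymbol\alpha)^2+(\mathbf M\cdot\boldsymbol\beta)^2]+\tfrac12M_3(\boldsymbol\alpha\times\boldsymbol\beta)\cdot\mathbf M+\varepsilon_0[\boldsymbol\beta^2\alpha_1+\boldsymbol\alpha^2\beta_2-(\boldsymbol\alpha\cdot\boldsymbol\beta)(\alpha_2+\beta_1)]-\varepsilon_1[\boldsymbol\beta^2(\boldsymbol\alpha\times\mathbf M)\cdot\mathbf e_1+\boldsymbol\alpha^2(\boldsymbol\beta\times\mathbf M)\cdot\mathbf e_2-(\boldsymbol\alpha\cdot\boldsymbol\beta)((\boldsymbol\alpha\times\mathbf M)\cdot\mathbf e_2+(\boldsymbol\beta\times\mathbf M)\cdot\mathbf e_1)]$ (for $\lambda=0$), where $\mathbf e_1=(1,0,0)$, $\mathbf e_2=(0,1,0)$.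 Complex variables: $x_{1,2}=(\alpha_1-\beta_2)\pm\mathrm i(\alpha_2+\beta_1)$, $y_{1,2}=(\alpha_1+\beta_2)\pm\mathrm i(\alpha_2-\beta_1)$, $z_{1,2}=\alpha_3\pm\mathrm i\beta_3$, $w_{1,2}=\tfrac12(M_1\pm\mathrm iM_2)$, $w_3=M_3-\lambda$; $\sqrt{x_1x_2}=|x_1|$. Functions: $\xi_1=w_1^2+\varepsilon_0x_1-\mathrm i\varepsilon_1(x_1w_3-2z_1w_1)-\varepsilon_1^2r^2$, $\xi_2=w_2^2+\varepsilon_0x_2+\mathrm i\varepsilon_1(x_2w_3-2z_2w_2)-\varepsilon_1^2r^2$; $F=\sqrt{x_1x_2}\,w_3-\frac{x_2z_1w_1+x_1z_2w_2}{\sqrt{x_1x_2}}+\mathrm i\varepsilon_1r^2\frac{x_1-x_2}{\sqrt{x_1x_2}}$; $F_1=\frac{x_2}{x_1}\xi_1-\frac{x_1}{x_2}\xi_2$; $\mathsf M=\frac1{2r^2}\big(\frac{x_2}{x_1}\xi_1+\frac{x_1}{x_2}\xi_2\big)+\varepsilon_1^2$; $L=\frac1{\sqrt{x_1x_2}}[(w_1+\mathrm i\varepsilon_1z_1)(w_2-\mathrm i\varepsilon_1z_2)+(x_1x_2+z_1z_2)(\mathsf M-\varepsilon_1^2)]+\varepsilon_1^2\sqrt{x_1x_2}$. Outer type: $\mathcal M_2$ lies in $\{\Phi=0,d\Phi=0\}$ for the first integral $\Phi=(p^2H-2G+\varepsilon_1^2r^4)^2-r^4K$ (equivalently one may use $\Phi_2=\tfrac14F_1^2-F^2(\mathsf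 M-\varepsilon_1^2)$, which gives the same linearization on $\mathcal M_2$ up to positive factor conventions used in the paper). Each $x\in\mathcal M_2$ is a zero of $\mathrm{sgrad}\,\Phi$; let $A_\Phi$ be its linearization at $x$ on $\mathbb R^9$; its characteristic polynomial is $-\mu^7(\mu^2-C_\Phi)$ with $C_\Phi=\tfrac12\operatorname{tr}(A_\Phi^2)$. The outer type of $x$ is "center" if $C_\Phi<0$, "saddle" if $C_\Phi>0$, and $x$ is degenerate if $C_\Phi=0$. The paper computes $C_\Phi$ with $\Phi=\Phi_2$. *)

theory Defs
  imports "HOL-Analysis.Analysis" "HOL-Analysis.Cross3"
begin

definition Mv :: "real^9 \<Rightarrow> real^3" where
  "Mv s = vector [s$1, s$2, s$3]"
definition alv :: "real^9 \<Rightarrow> real^3" where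
  "alv s = vector [s$4, s$5, s$6]"
definition bev :: "real^9 \<Rightarrow> real^3" where
  "bev s = vector [s$7, s$8, s$9]"

definition pd :: "(real^9 \<Rightarrow> real) \<Rightarrow> 9 \<Rightarrow> real^9 \<Rightarrow> real" where
  "pd Phi i s = frechet_derivative Phi (at s) (axis i 1)"

text \<open>Lie--Poisson (skew) gradient on e(3,2)^* = R^9.\<close>
definition sgrad :: "(real^9 \<Rightarrow> real) \<Rightarrow> real^9 \<Rightarrow> real^9" where
  "sgrad Phi s =
    (let dM = vector [pd Phi 1 s, pd Phi 2 s, pd Phi 3 s];
         dA = vector [pd Phi 4 s, pd Phi 5 s, pd Phi 6 s];
         dB = vector [pd Phi 7 s, pd Phi 8 s, pd Phi 9 s];
         Md = cross3 (Mv s) dM + cross3 (alv s) dA + cross3 (bev s) dB;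
         Ad = cross3 (alv s) dM;
         Bd = cross3 (bev s) dM
     in vector [Md$1, Md$2, Md$3, Ad$1, Ad$2, Ad$3, Bd$1, Bd$2, Bd$3])"

definition A_lin :: "(real^9 \<Rightarrow> real) \<Rightarrow> real^9 \<Rightarrow> real^9^9" where
  "A_lin Phi s = matrix (frechet_derivative (sgrad Phi) (at s))"

definition C_Phi :: "(real^9 \<Rightarrow> real) \<Rightarrow> real^9 \<Rightarrow> real" where
  "C_Phi Phi s = trace (A_lin Phi s ** A_lin Phi s) / 2"

definition outer_center :: "(real^9 \<Rightarrow> real) \<Rightarrow> real^9 \<Rightarrow> bool" where
  "outer_center Phi s \<longleftrightarrow> C_Phi Phi s < 0"
definition outer_saddle :: "(real^9 \<Rightarrow> real) \<Rightarrow> real^9 \<Rightarrow> bool" where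
  "outer_saddle Phi s \<longleftrightarrow> C_Phi Phi s > 0"
definition outer_degenerate :: "(real^9 \<Rightarrow> real) \<Rightarrow> real^9 \<Rightarrow> bool" where
  "outer_degenerate Phi s \<longleftrightarrow> C_Phi Phi s = 0"

definition P6 :: "real \<Rightarrow> real \<Rightarrow> (real^9) set" where
  "P6 a b = {s. alv s \<bullet> alv s = a\<^sup>2 \<and> bev s \<bullet> bev s = b\<^sup>2 \<and> alv s \<bullet> bev s = 0}"

text \<open>Complex variables (lambda = 0).\<close>
definition cx1 :: "real^9 \<Rightarrow> complex" where
  "cx1 s = Complex (s$4 - s$8) (s$5 + s$7)"
definition cx2 :: "real^9 \<Rightarrow> complex" where
  "cx2 s = Complex (s$4 - s$8) (- (s$5 + s$7))"
definition cz1 :: "real^9 \<Rightarrow> complex" where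
  "cz1 s = Complex (s$6) (s$9)"
definition cz2 :: "real^9 \<Rightarrow> complex" where
  "cz2 s = Complex (s$6) (- s$9)"
definition cw1 :: "real^9 \<Rightarrow> complex" where
  "cw1 s = Complex (s$1 / 2) (s$2 / 2)"
definition cw2 :: "real^9 \<Rightarrow> complex" where
  "cw2 s = Complex (s$1 / 2) (- s$2 / 2)"
definition cw3 :: "real^9 \<Rightarrow> complex" where
  "cw3 s = complex_of_real (s$3)"

text \<open>sqrt(x1 x2) = |x1|.\<close>
definition csq :: "real^9 \<Rightarrow> complex" where
  "csq s = complex_of_real (cmod (cx1 s))"

definition xi1 :: "real \<Rightarrow> real \<Rightarrow> real \<Rightarrow> real \<Rightarrow> real^9 \<Rightarrow> complex" where
  "xi1 a b e0 e1 s = (cw1 s)\<^sup>2 + of_real e0 * cx1 s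
     - \<i> * of_real e1 * (cx1 s * cw3 s - 2 * cz1 s * cw1 s) - of_real (e1\<^sup>2 * (a\<^sup>2 - b\<^sup>2))"

definition xi2 :: "real \<Rightarrow> real \<Rightarrow> real \<Rightarrow> real \<Rightarrow> real^9 \<Rightarrow> complex" where
  "xi2 a b e0 e1 s = (cw2 s)\<^sup>2 + of_real e0 * cx2 s
     + \<i> * of_real e1 * (cx2 s * cw3 s - 2 * cz2 s * cw2 s) - of_real (e1\<^sup>2 * (a\<^sup>2 - b\<^sup>2))"

definition FF :: "real \<Rightarrow> real \<Rightarrow> real \<Rightarrow> real \<Rightarrow> real^9 \<Rightarrow> complex" where
  "FF a b e0 e1 s = csq s * cw3 s
     - (cx2 s * cz1 s * cw1 s + cx1 s * cz2 s * cw2 s) / csq s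
     + \<i> * of_real e1 * of_real (a\<^sup>2 - b\<^sup>2) * (cx1 s - cx2 s) / csq s"

definition FF1 :: "real \<Rightarrow> real \<Rightarrow> real \<Rightarrow> real \<Rightarrow> real^9 \<Rightarrow> complex" where
  "FF1 a b e0 e1 s = cx2 s / cx1 s * xi1 a b e0 e1 s - cx1 s / cx2 s * xi2 a b e0 e1 s"

definition MMc :: "real \<Rightarrow> real \<Rightarrow> real \<Rightarrow> real \<Rightarrow> real^9 \<Rightarrow> complex" where
  "MMc a b e0 e1 s = 1 / (2 * of_real (a\<^sup>2 - b\<^sup>2))
     * (cx2 s / cx1 s * xi1 a b e0 e1 s + cx1 s / cx2 s * xi2 a b e0 e1 s) + of_real (e1\<^sup>2)"

definition LLc :: "real \<Rightarrow> real \<Rightarrow> real \<Rightarrow> real \<Rightarrow> real^9 \<Rightarrow> complex" where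
  "LLc a b e0 e1 s = 1 / csq s *
     ((cw1 s + \<i> * of_real e1 * cz1 s) * (cw2 s - \<i> * of_real e1 * cz2 s)
      + (cx1 s * cx2 s + cz1 s * cz2 s) * (MMc a b e0 e1 s - of_real (e1\<^sup>2)))
     + of_real (e1\<^sup>2) * csq s"

definition Phi2c :: "real \<Rightarrow> real \<Rightarrow> real \<Rightarrow> real \<Rightarrow> real^9 \<Rightarrow> complex" where
  "Phi2c a b e0 e1 s = (FF1 a b e0 e1 s)\<^sup>2 / 4
     - (FF a b e0 e1 s)\<^sup>2 * (MMc a b e0 e1 s - of_real (e1\<^sup>2))"

text \<open>Real-valued versions (the expressions are real for real phase points).\<close>
definition MMr :: "real \<Rightarrow> real \<Rightarrow> real \<Rightarrow> real \<Rightarrow> real^9 \<Rightarrow> real" where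
  "MMr a b e0 e1 s = Re (MMc a b e0 e1 s)"
definition LLr :: "real \<Rightarrow> real \<Rightarrow> real \<Rightarrow> real \<Rightarrow> real^9 \<Rightarrow> real" where
  "LLr a b e0 e1 s = Re (LLc a b e0 e1 s)"
definition Phi2 :: "real \<Rightarrow> real \<Rightarrow> real \<Rightarrow> real \<Rightarrow> real^9 \<Rightarrow> real" where
  "Phi2 a b e0 e1 s = Re (Phi2c a b e0 e1 s)"

definition M2 :: "real \<Rightarrow> real \<Rightarrow> real \<Rightarrow> real \<Rightarrow> (real^9) set" where
  "M2 a b e0 e1 = closure {s \<in> P6 a b. cx1 s * cx2 s \<noteq> 0 \<and> FF a b e0 e1 s = 0 \<and> FF1 a b e0 e1 s = 0}"

end

theory Submission
  imports Defs
begin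

text \<open>
  Away from \<open>x\<^sub>1x\<^sub>2 = 0\<close>, clearing the denominators \<open>x\<^sub>1, x\<^sub>2, \<surd>(x\<^sub>1x\<^sub>2)\<close> turns the paper's
  functions into real polynomials \<open>f = \<surd>(x\<^sub>1x\<^sub>2) F\<close>, \<open>g = -\<i> x\<^sub>1x\<^sub>2 F\<^sub>1\<close>,
  \<open>p = 4 r x\<^sub>1x\<^sub>2 (\<M> - \<epsilon>\<^sub>1\<^sup>2)\<close>, and \<open>\<Phi>\<^sub>2 = -(r g\<^sup>2 + p f\<^sup>2) K\<close> with \<open>K = 1/(4 r (x\<^sub>1x\<^sub>2)\<^sup>2)\<close>.
  On \<open>\<M>\<^sub>2\<close> both \<open>f\<close> and \<open>g\<close> vanish, so there the linearization of \<open>sgrad \<Phi>\<^sub>2\<close> is the rank-two map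
  \<open>v \<mapsto> -2K (r (dg v) sgrad g + p (df v) sgrad f)\<close>, and the trace of its square is
  \<open>-8 r p K\<^sup>2 {g, f}\<^sup>2\<close>. Finally, an explicit certificate shows that on \<open>\<P>\<^sup>6 \<inter> {f = 0}\<close> the bracket
  \<open>2{g, f}\<close> equals \<open>4 r x\<^sub>1x\<^sub>2 \<surd>(x\<^sub>1x\<^sub>2) L\<close>.
\<close>

lemma exhaust_9:
  fixes x :: 9
  shows "x = 1 \<or> x = 2 \<or> x = 3 \<or> x = 4 \<or> x = 5 \<or> x = 6 \<or> x = 7 \<or> x = 8 \<or> x = 9"
proof (induct x)
  case (of_int z)
  then have "z = 0 \<or> z = 1 \<or> z = 2 \<or> z = 3 \<or> z = 4 \<or> z = 5 \<or> z = 6 \<or> z = 7 \<or> z = 8"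
    by fastforce
  then show ?case by auto
qed

lemma sum_9: "sum f (UNIV::9 set) = f 1 + f 2 + f 3 + f 4 + f 5 + f 6 + f 7 + f 8 + f 9"
proof -
  have UNIV_9: "(UNIV::9 set) = {1,2,3,4,5,6,7,8,9}"
    using exhaust_9 by auto
  show ?thesis
    unfolding UNIV_9 by (simp add: ac_simps)
qed

lemma vec9_eqI:
  fixes u v :: "real^9"
  assumes "u$1 = v$1" "u$2 = v$2" "u$3 = v$3" "u$4 = v$4" "u$5 = v$5" "u$6 = v$6"
    "u$7 = v$7" "u$8 = v$8" "u$9 = v$9"
  shows "u = v"
  unfolding vec_eq_iff
proof
  fix i :: 9
  show "u$i = v$i" using exhaust_9[of i] assms by auto
qed

lemma has_derivative_vec_nth [derivative_intros]:
  "((\<lambda>x::real^'n. x $ i) has_derivative (\<lambda>v. v $ i)) F"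
  by (rule bounded_linear_imp_has_derivative) (rule bounded_linear_vec_nth)

lemma differentiable_vec_nth [simp, derivative_intros]:
  "(\<lambda>x::real^'n. x $ i) differentiable F"
  using has_derivative_vec_nth differentiableI by blast

lemma has_derivative_vec_componentwise:
  fixes f f' :: "'a::real_normed_vector \<Rightarrow> real^'n"
  assumes "\<And>j. ((\<lambda>x. f x $ j) has_derivative (\<lambda>v. f' v $ j)) (at s within S)"
  shows "(f has_derivative f') (at s within S)"
  unfolding has_derivative_componentwise_within[of f f' s S]
  using assms by (auto simp: Basis_vec_def inner_axis)

lemma has_derivative_mult_vanishing:
  fixes u h :: "'a::real_normed_vector \<Rightarrow> real"
  assumes "(u has_derivative du) (at s)" "u s = 0" "h differentiable (at s)"
  shows "((\<lambda>x. u x * h x) has_derivative (\<lambda>v. du v * h s)) (at s)"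
proof -
  obtain dh where "(h has_derivative dh) (at s)"
    using assms(3) differentiable_def by blast
  from has_derivative_mult[OF assms(1) this] show ?thesis
    using assms(2) by simp
qed

lemma trace_square_rank2:
  fixes P Q U W :: "real^'n"
  shows "trace (matrix (\<lambda>v. (P \<bullet> v) *\<^sub>R U + (Q \<bullet> v) *\<^sub>R W) ** matrix (\<lambda>v. (P \<bullet> v) *\<^sub>R U + (Q \<bullet> v) *\<^sub>R W))
     = (P \<bullet> U)\<^sup>2 + 2 * (P \<bullet> W) * (Q \<bullet> U) + (Q \<bullet> W)\<^sup>2"
proof -
  have entry: "matrix (\<lambda>v. (P \<bullet> v) *\<^sub>R U + (Q \<bullet> v) *\<^sub>R W) $ i $ j = P$j * U$i + Q$j * W$i" for i j
    by (simp add: matrix_def inner_axis)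
  have "trace (matrix (\<lambda>v. (P \<bullet> v) *\<^sub>R U + (Q \<bullet> v) *\<^sub>R W) ** matrix (\<lambda>v. (P \<bullet> v) *\<^sub>R U + (Q \<bullet> v) *\<^sub>R W))
      = (\<Sum>i\<in>UNIV. \<Sum>k\<in>UNIV. (P$k * U$i + Q$k * W$i) * (P$i * U$k + Q$i * W$k))"
    by (simp add: trace_def matrix_matrix_mult_def entry)
  also have "\<dots> = (\<Sum>i\<in>UNIV. \<Sum>k\<in>UNIV. (P$i * U$i) * (P$k * U$k) + (Q$i * U$i) * (P$k * W$k)
      + (P$i * W$i) * (Q$k * U$k) + (Q$i * W$i) * (Q$k * W$k))"
    by (intro sum.cong refl) (simp add: algebra_simps)
  also have "\<dots> = (P \<bullet> U) * (P \<bullet> U) + (Q \<bullet> U) * (P \<bullet> W) + (P \<bullet> W) * (Q \<bullet> U) + (Q \<bullet> W) * (Q \<bullet> W)"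
    by (simp add: sum.distrib inner_vec_def sum_product)
  finally show ?thesis
    by (simp add: power2_eq_square)
qed

subsection \<open>The Lie--Poisson field of a covector\<close>

definition lp_field :: "real^9 \<Rightarrow> (9 \<Rightarrow> real) \<Rightarrow> real^9" where
  "lp_field x G = vector [x$2*G 3 - x$3*G 2 + x$5*G 6 - x$6*G 5 + x$8*G 9 - x$9*G 8,
     x$3*G 1 - x$1*G 3 + x$6*G 4 - x$4*G 6 + x$9*G 7 - x$7*G 9,
     x$1*G 2 - x$2*G 1 + x$4*G 5 - x$5*G 4 + x$7*G 8 - x$8*G 7,
     x$5*G 3 - x$6*G 2, x$6*G 1 - x$4*G 3, x$4*G 2 - x$5*G 1,
     x$8*G 3 - x$9*G 2, x$9*G 1 - x$7*G 3, x$7*G 2 - x$8*G 1]"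

lemma sgrad_eq_lp_field: "sgrad Phi x = lp_field x (\<lambda>i. pd Phi i x)"
  by (rule vec9_eqI)
    (simp_all add: sgrad_def lp_field_def Mv_def alv_def bev_def cross3_def Let_def vector_def algebra_simps)

lemma lp_field_linear:
  "lp_field x (\<lambda>i. a * X i + b * Y i) = a *\<^sub>R lp_field x X + b *\<^sub>R lp_field x Y"
  by (rule vec9_eqI) (simp_all add: lp_field_def vector_def algebra_simps)

lemma lp_field_skew:
  "(\<chi> i. X i) \<bullet> lp_field x Y = - ((\<chi> i. Y i) \<bullet> lp_field x X)"
  by (simp add: lp_field_def vector_def inner_vec_def sum_9 algebra_simps)

lemma lp_field_self: "(\<chi> i. X i) \<bullet> lp_field x X = 0"
  using lp_field_skew[of X x X] by simp

lemma has_derivative_lp_field_vanishing: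
  assumes d: "\<And>i. (G i has_derivative dG i) (at s)" and z: "\<And>i. G i s = 0"
  shows "((\<lambda>x. lp_field x (\<lambda>i. G i x)) has_derivative (\<lambda>v. lp_field s (\<lambda>i. dG i v))) (at s)"
proof (rule has_derivative_vec_componentwise)
  fix j :: 9
  show "((\<lambda>x. lp_field x (\<lambda>i. G i x) $ j) has_derivative (\<lambda>v. lp_field s (\<lambda>i. dG i v) $ j)) (at s)"
    using exhaust_9[of j]
    apply (elim disjE)
            apply (simp_all add: lp_field_def vector_def)
            apply (rule has_derivative_eq_rhs, (rule d derivative_intros)+, simp add: z algebra_simps)+
    done
qed

text \<open>By skew-symmetry \<open>P \<cdot> X\<^sub>P = Q \<cdot> X\<^sub>Q = 0\<close>, so only the bracket \<open>P \<cdot> X\<^sub>Q\<close> survives in the trace.\<close>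

lemma C_Phi_rank2:
  fixes P Q :: "real^9"
  assumes "(sgrad Phi has_derivative (\<lambda>v. lp_field s (\<lambda>i. c * (P \<bullet> v) * P$i + d * (Q \<bullet> v) * Q$i))) (at s)"
  shows "C_Phi Phi s = - c * d * (P \<bullet> lp_field s (\<lambda>i. Q$i))\<^sup>2"
proof -
  define U where "U = lp_field s (\<lambda>i. P$i)"
  define W where "W = lp_field s (\<lambda>i. Q$i)"
  have "(\<lambda>v. lp_field s (\<lambda>i. c * (P \<bullet> v) * P$i + d * (Q \<bullet> v) * Q$i))
      = (\<lambda>v. (P \<bullet> v) *\<^sub>R (c *\<^sub>R U) + (Q \<bullet> v) *\<^sub>R (d *\<^sub>R W))"
  proof
    fix v
    show "lp_field s (\<lambda>i. c * (P \<bullet> v) * P$i + d * (Q \<bullet> v) * Q$i)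
        = (P \<bullet> v) *\<^sub>R (c *\<^sub>R U) + (Q \<bullet> v) *\<^sub>R (d *\<^sub>R W)"
      unfolding lp_field_linear[of s "c * (P \<bullet> v)" "\<lambda>i. P$i" "d * (Q \<bullet> v)" "\<lambda>i. Q$i"]
      by (simp add: U_def W_def mult.commute)
  qed
  then have A: "A_lin Phi s = matrix (\<lambda>v. (P \<bullet> v) *\<^sub>R (c *\<^sub>R U) + (Q \<bullet> v) *\<^sub>R (d *\<^sub>R W))"
    unfolding A_lin_def frechet_derivative_at[OF assms, symmetric] by simp
  have "P \<bullet> U = 0" "Q \<bullet> W = 0"
    using lp_field_self[of "\<lambda>i. P$i" s] lp_field_self[of "\<lambda>i. Q$i" s] by (simp_all add: U_def W_def)
  moreover have "Q \<bullet> U = - (P \<bullet> W)"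
    using lp_field_skew[of "\<lambda>i. Q$i" s "\<lambda>i. P$i"] by (simp add: U_def W_def)
  ultimately show ?thesis
    unfolding C_Phi_def A trace_square_rank2 by (simp add: W_def power2_eq_square)
qed

subsection \<open>Polynomial forms of \<open>F\<close>, \<open>F\<^sub>1\<close>, \<open>\<M>\<close>, \<open>L\<close> and \<open>\<Phi>\<^sub>2\<close>\<close>

definition x1x2 :: "real^9 \<Rightarrow> real" where
  "x1x2 x = (x$4 - x$8)\<^sup>2 + (x$5 + x$7)\<^sup>2"

lemma cx1_mult_cx2: "cx1 x * cx2 x = of_real (x1x2 x)"
  by (simp add: complex_eq_iff cx1_def cx2_def x1x2_def power2_eq_square algebra_simps)

lemma cx1_cx2_nonzero:
  assumes "x1x2 x \<noteq> 0"
  shows "cx1 x \<noteq> 0" "cx2 x \<noteq> 0"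
  using cx1_mult_cx2[of x] assms by auto

lemma x1x2_pos: "x1x2 x \<noteq> 0 \<Longrightarrow> 0 < x1x2 x"
  by (simp add: x1x2_def sum_power2_gt_zero_iff)

lemma csq_eq_sqrt_x1x2: "csq x = of_real (sqrt (x1x2 x))"
  by (simp add: csq_def cx1_def x1x2_def norm_complex_def)

lemma cz1_mult_cz2: "cz1 x * cz2 x = of_real ((x$6)\<^sup>2 + (x$9)\<^sup>2)"
  by (simp add: complex_eq_iff cz1_def cz2_def power2_eq_square algebra_simps)

lemma shifted_w_product:
  "(cw1 x + \<i> * of_real e1 * cz1 x) * (cw2 x - \<i> * of_real e1 * cz2 x)
     = of_real (((x$1 - 2*e1*x$9)\<^sup>2 + (x$2 + 2*e1*x$6)\<^sup>2) / 4)"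
  by (simp add: complex_eq_iff cw1_def cw2_def cz1_def cz2_def power2_eq_square field_simps)

text \<open>With \<open>r = a\<^sup>2 - b\<^sup>2\<close>, these are \<open>\<surd>(x\<^sub>1x\<^sub>2) F\<close>, \<open>-\<i> x\<^sub>1x\<^sub>2 F\<^sub>1\<close>, \<open>4 r x\<^sub>1x\<^sub>2 (\<M> - \<epsilon>\<^sub>1\<^sup>2)\<close>
  and \<open>4 r x\<^sub>1x\<^sub>2 \<surd>(x\<^sub>1x\<^sub>2) L\<close> written out in the phase coordinates.\<close>

definition F_poly :: "real \<Rightarrow> real \<Rightarrow> real \<Rightarrow> real^9 \<Rightarrow> real" where
  "F_poly e0 e1 r x = (0 - x$1*x$4*x$6 - x$1*x$5*x$9 + x$1*x$6*x$8 - x$1*x$7*x$9 + x$2*x$4*x$9 - x$2*x$5*x$6 - x$2*x$6*x$7 - x$2*x$8*x$9 + x$3*x$4^2 - 2*x$3*x$4*x$8 + x$3*x$5^2 + 2*x$3*x$5*x$7 + x$3*x$7^2 + x$3*x$8^2 - 2*x$5*e1*r - 2*x$7*e1*r)"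

definition F1_poly :: "real \<Rightarrow> real \<Rightarrow> real \<Rightarrow> real^9 \<Rightarrow> real" where
  "F1_poly e0 e1 r x = (0 - x$1^2*x$4*x$5 - x$1^2*x$4*x$7 + x$1^2*x$5*x$8 + x$1^2*x$7*x$8 + x$1*x$2*x$4^2 - 2*x$1*x$2*x$4*x$8 - x$1*x$2*x$5^2 - 2*x$1*x$2*x$5*x$7 - x$1*x$2*x$7^2 + x$1*x$2*x$8^2 + 2*x$1*x$4^2*x$6*e1 + 4*x$1*x$4*x$5*x$9*e1 - 4*x$1*x$4*x$6*x$8*e1 + 4*x$1*x$4*x$7*x$9*e1 - 2*x$1*x$5^2*x$6*e1 - 4*x$1*x$5*x$6*x$7*e1 - 4*x$1*x$5*x$8*x$9*e1 - 2*x$1*x$6*x$7^2*e1 + 2*x$1*x$6*x$8^2*e1 - 4*x$1*x$7*x$8*x$9*e1 + x$2^2*x$4*x$5 + x$2^2*x$4*x$7 - x$2^2*x$5*x$8 - x$2^2*x$7*x$8 - 2*x$2*x$4^2*x$9*e1 + 4*x$2*x$4*x$5*x$6*e1 + 4*x$2*x$4*x$6*x$7*e1 + 4*x$2*x$4*x$8*x$9*e1 + 2*x$2*x$5^2*x$9*e1 - 4*x$2*x$5*x$6*x$8*e1 + 4*x$2*x$5*x$7*x$9*e1 - 4*x$2*x$6*x$7*x$8*e1 + 2*x$2*x$7^2*x$9*e1 - 2*x$2*x$8^2*x$9*e1 - 2*x$3*x$4^3*e1 + 6*x$3*x$4^2*x$8*e1 - 2*x$3*x$4*x$5^2*e1 -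 4*x$3*x$4*x$5*x$7*e1 - 2*x$3*x$4*x$7^2*e1 - 6*x$3*x$4*x$8^2*e1 + 2*x$3*x$5^2*x$8*e1 + 4*x$3*x$5*x$7*x$8*e1 + 2*x$3*x$7^2*x$8*e1 + 2*x$3*x$8^3*e1 - 2*x$4^2*x$5*e0 - 2*x$4^2*x$7*e0 + 4*x$4*x$5*x$8*e0 + 4*x$4*x$5*e1^2*r + 4*x$4*x$7*x$8*e0 + 4*x$4*x$7*e1^2*r - 2*x$5^3*e0 - 6*x$5^2*x$7*e0 - 6*x$5*x$7^2*e0 - 2*x$5*x$8^2*e0 - 4*x$5*x$8*e1^2*r - 2*x$7^3*e0 - 2*x$7*x$8^2*e0 - 4*x$7*x$8*e1^2*r)"

definition M_poly :: "real \<Rightarrow> real \<Rightarrow> real \<Rightarrow> real^9 \<Rightarrow> real" where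
  "M_poly e0 e1 r x = (x$1^2*x$4^2 - 2*x$1^2*x$4*x$8 - x$1^2*x$5^2 - 2*x$1^2*x$5*x$7 - x$1^2*x$7^2 + x$1^2*x$8^2 + 4*x$1*x$2*x$4*x$5 + 4*x$1*x$2*x$4*x$7 - 4*x$1*x$2*x$5*x$8 - 4*x$1*x$2*x$7*x$8 - 4*x$1*x$4^2*x$9*e1 + 8*x$1*x$4*x$5*x$6*e1 + 8*x$1*x$4*x$6*x$7*e1 + 8*x$1*x$4*x$8*x$9*e1 + 4*x$1*x$5^2*x$9*e1 - 8*x$1*x$5*x$6*x$8*e1 + 8*x$1*x$5*x$7*x$9*e1 - 8*x$1*x$6*x$7*x$8*e1 + 4*x$1*x$7^2*x$9*e1 - 4*x$1*x$8^2*x$9*e1 - x$2^2*x$4^2 + 2*x$2^2*x$4*x$8 + x$2^2*x$5^2 + 2*x$2^2*x$5*x$7 + x$2^2*x$7^2 - x$2^2*x$8^2 - 4*x$2*x$4^2*x$6*e1 - 8*x$2*x$4*x$5*x$9*e1 + 8*x$2*x$4*x$6*x$8*e1 - 8*x$2*x$4*x$7*x$9*e1 + 4*x$2*x$5^2*x$6*e1 + 8*x$2*x$5*x$6*x$7*e1 + 8*x$2*x$5*x$8*x$9*e1 + 4*x$2*x$6*x$7^2*e1 - 4*x$2*x$6*x$8^2*e1 + 8*x$2*x$7*x$8*x$9*e1 - 4*x$3*x$4^2*x$5*e1 - 4*x$3*x$4^2*x$7*e1 + 8*x$3*x$4*x$5*x$8*e1 + 8*x$3*x$4*x$7*x$8*e1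 - 4*x$3*x$5^3*e1 - 12*x$3*x$5^2*x$7*e1 - 12*x$3*x$5*x$7^2*e1 - 4*x$3*x$5*x$8^2*e1 - 4*x$3*x$7^3*e1 - 4*x$3*x$7*x$8^2*e1 + 4*x$4^3*e0 - 12*x$4^2*x$8*e0 - 4*x$4^2*e1^2*r + 4*x$4*x$5^2*e0 + 8*x$4*x$5*x$7*e0 + 4*x$4*x$7^2*e0 + 12*x$4*x$8^2*e0 + 8*x$4*x$8*e1^2*r - 4*x$5^2*x$8*e0 + 4*x$5^2*e1^2*r - 8*x$5*x$7*x$8*e0 + 8*x$5*x$7*e1^2*r - 4*x$7^2*x$8*e0 + 4*x$7^2*e1^2*r - 4*x$8^3*e0 - 4*x$8^2*e1^2*r)"

definition L_poly :: "real \<Rightarrow> real \<Rightarrow> real \<Rightarrow> real^9 \<Rightarrow> real" where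
  "L_poly e0 e1 r x = (x$1^2*x$4^4 - 4*x$1^2*x$4^3*x$8 + x$1^2*x$4^2*x$6^2 + 6*x$1^2*x$4^2*x$8^2 + x$1^2*x$4^2*x$9^2 + x$1^2*x$4^2*r - 2*x$1^2*x$4*x$6^2*x$8 - 4*x$1^2*x$4*x$8^3 - 2*x$1^2*x$4*x$8*x$9^2 - 2*x$1^2*x$4*x$8*r - x$1^2*x$5^4 - 4*x$1^2*x$5^3*x$7 - x$1^2*x$5^2*x$6^2 - 6*x$1^2*x$5^2*x$7^2 - x$1^2*x$5^2*x$9^2 + x$1^2*x$5^2*r - 2*x$1^2*x$5*x$6^2*x$7 - 4*x$1^2*x$5*x$7^3 - 2*x$1^2*x$5*x$7*x$9^2 + 2*x$1^2*x$5*x$7*r - x$1^2*x$6^2*x$7^2 + x$1^2*x$6^2*x$8^2 - x$1^2*x$7^4 - x$1^2*x$7^2*x$9^2 + x$1^2*x$7^2*r + x$1^2*x$8^4 + x$1^2*x$8^2*x$9^2 + x$1^2*x$8^2*r + 4*x$1*x$2*x$4^3*x$5 + 4*x$1*x$2*x$4^3*x$7 - 12*x$1*x$2*x$4^2*x$5*x$8 - 12*x$1*x$2*x$4^2*x$7*x$8 + 4*x$1*x$2*x$4*x$5^3 + 12*x$1*x$2*x$4*x$5^2*x$7 + 4*x$1*x$2*x$4*x$5*x$6^2 + 12*x$1*x$2*x$4*x$5*x$7^2 + 12*x$1*x$2*x$4*x$5*x$8^2 + 4*x$1*x$2*x$4*x$5*x$9^2 + 4*x$1*x$2*x$4*x$6^2*x$7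 + 4*x$1*x$2*x$4*x$7^3 + 12*x$1*x$2*x$4*x$7*x$8^2 + 4*x$1*x$2*x$4*x$7*x$9^2 - 4*x$1*x$2*x$5^3*x$8 - 12*x$1*x$2*x$5^2*x$7*x$8 - 4*x$1*x$2*x$5*x$6^2*x$8 - 12*x$1*x$2*x$5*x$7^2*x$8 - 4*x$1*x$2*x$5*x$8^3 - 4*x$1*x$2*x$5*x$8*x$9^2 - 4*x$1*x$2*x$6^2*x$7*x$8 - 4*x$1*x$2*x$7^3*x$8 - 4*x$1*x$2*x$7*x$8^3 - 4*x$1*x$2*x$7*x$8*x$9^2 - 4*x$1*x$4^4*x$9*e1 + 8*x$1*x$4^3*x$5*x$6*e1 + 8*x$1*x$4^3*x$6*x$7*e1 + 16*x$1*x$4^3*x$8*x$9*e1 - 24*x$1*x$4^2*x$5*x$6*x$8*e1 - 4*x$1*x$4^2*x$6^2*x$9*e1 - 24*x$1*x$4^2*x$6*x$7*x$8*e1 - 24*x$1*x$4^2*x$8^2*x$9*e1 - 4*x$1*x$4^2*x$9^3*e1 - 4*x$1*x$4^2*x$9*e1*r + 8*x$1*x$4*x$5^3*x$6*e1 + 24*x$1*x$4*x$5^2*x$6*x$7*e1 + 8*x$1*x$4*x$5*x$6^3*e1 + 24*x$1*x$4*x$5*x$6*x$7^2*e1 + 24*x$1*x$4*x$5*x$6*x$8^2*e1 + 8*x$1*x$4*x$5*x$6*x$9^2*e1 + 8*x$1*x$4*x$6^3*x$7*e1 + 8*x$1*x$4*x$6^2*x$8*x$9*e1 + 8*x$1*x$4*x$6*x$7^3*e1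 + 24*x$1*x$4*x$6*x$7*x$8^2*e1 + 8*x$1*x$4*x$6*x$7*x$9^2*e1 + 16*x$1*x$4*x$8^3*x$9*e1 + 8*x$1*x$4*x$8*x$9^3*e1 + 8*x$1*x$4*x$8*x$9*e1*r + 4*x$1*x$5^4*x$9*e1 - 8*x$1*x$5^3*x$6*x$8*e1 + 16*x$1*x$5^3*x$7*x$9*e1 + 4*x$1*x$5^2*x$6^2*x$9*e1 - 24*x$1*x$5^2*x$6*x$7*x$8*e1 + 24*x$1*x$5^2*x$7^2*x$9*e1 + 4*x$1*x$5^2*x$9^3*e1 - 4*x$1*x$5^2*x$9*e1*r - 8*x$1*x$5*x$6^3*x$8*e1 + 8*x$1*x$5*x$6^2*x$7*x$9*e1 - 24*x$1*x$5*x$6*x$7^2*x$8*e1 - 8*x$1*x$5*x$6*x$8^3*e1 - 8*x$1*x$5*x$6*x$8*x$9^2*e1 + 16*x$1*x$5*x$7^3*x$9*e1 + 8*x$1*x$5*x$7*x$9^3*e1 - 8*x$1*x$5*x$7*x$9*e1*r - 8*x$1*x$6^3*x$7*x$8*e1 + 4*x$1*x$6^2*x$7^2*x$9*e1 - 4*x$1*x$6^2*x$8^2*x$9*e1 - 8*x$1*x$6*x$7^3*x$8*e1 - 8*x$1*x$6*x$7*x$8^3*e1 - 8*x$1*x$6*x$7*x$8*x$9^2*e1 + 4*x$1*x$7^4*x$9*e1 + 4*x$1*x$7^2*x$9^3*e1 - 4*x$1*x$7^2*x$9*e1*r - 4*x$1*x$8^4*x$9*e1 - 4*x$1*x$8^2*x$9^3*e1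 - 4*x$1*x$8^2*x$9*e1*r - x$2^2*x$4^4 + 4*x$2^2*x$4^3*x$8 - x$2^2*x$4^2*x$6^2 - 6*x$2^2*x$4^2*x$8^2 - x$2^2*x$4^2*x$9^2 + x$2^2*x$4^2*r + 2*x$2^2*x$4*x$6^2*x$8 + 4*x$2^2*x$4*x$8^3 + 2*x$2^2*x$4*x$8*x$9^2 - 2*x$2^2*x$4*x$8*r + x$2^2*x$5^4 + 4*x$2^2*x$5^3*x$7 + x$2^2*x$5^2*x$6^2 + 6*x$2^2*x$5^2*x$7^2 + x$2^2*x$5^2*x$9^2 + x$2^2*x$5^2*r + 2*x$2^2*x$5*x$6^2*x$7 + 4*x$2^2*x$5*x$7^3 + 2*x$2^2*x$5*x$7*x$9^2 + 2*x$2^2*x$5*x$7*r + x$2^2*x$6^2*x$7^2 - x$2^2*x$6^2*x$8^2 + x$2^2*x$7^4 + x$2^2*x$7^2*x$9^2 + x$2^2*x$7^2*r - x$2^2*x$8^4 - x$2^2*x$8^2*x$9^2 + x$2^2*x$8^2*r - 4*x$2*x$4^4*x$6*e1 - 8*x$2*x$4^3*x$5*x$9*e1 + 16*x$2*x$4^3*x$6*x$8*e1 - 8*x$2*x$4^3*x$7*x$9*e1 + 24*x$2*x$4^2*x$5*x$8*x$9*e1 - 4*x$2*x$4^2*x$6^3*e1 - 24*x$2*x$4^2*x$6*x$8^2*e1 - 4*x$2*x$4^2*x$6*x$9^2*e1 + 4*x$2*x$4^2*x$6*e1*r + 24*x$2*x$4^2*x$7*x$8*x$9*e1 - 8*x$2*x$4*x$5^3*x$9*e1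 - 24*x$2*x$4*x$5^2*x$7*x$9*e1 - 8*x$2*x$4*x$5*x$6^2*x$9*e1 - 24*x$2*x$4*x$5*x$7^2*x$9*e1 - 24*x$2*x$4*x$5*x$8^2*x$9*e1 - 8*x$2*x$4*x$5*x$9^3*e1 + 8*x$2*x$4*x$6^3*x$8*e1 - 8*x$2*x$4*x$6^2*x$7*x$9*e1 + 16*x$2*x$4*x$6*x$8^3*e1 + 8*x$2*x$4*x$6*x$8*x$9^2*e1 - 8*x$2*x$4*x$6*x$8*e1*r - 8*x$2*x$4*x$7^3*x$9*e1 - 24*x$2*x$4*x$7*x$8^2*x$9*e1 - 8*x$2*x$4*x$7*x$9^3*e1 + 4*x$2*x$5^4*x$6*e1 + 16*x$2*x$5^3*x$6*x$7*e1 + 8*x$2*x$5^3*x$8*x$9*e1 + 4*x$2*x$5^2*x$6^3*e1 + 24*x$2*x$5^2*x$6*x$7^2*e1 + 4*x$2*x$5^2*x$6*x$9^2*e1 + 4*x$2*x$5^2*x$6*e1*r + 24*x$2*x$5^2*x$7*x$8*x$9*e1 + 8*x$2*x$5*x$6^3*x$7*e1 + 8*x$2*x$5*x$6^2*x$8*x$9*e1 + 16*x$2*x$5*x$6*x$7^3*e1 + 8*x$2*x$5*x$6*x$7*x$9^2*e1 + 8*x$2*x$5*x$6*x$7*e1*r + 24*x$2*x$5*x$7^2*x$8*x$9*e1 + 8*x$2*x$5*x$8^3*x$9*e1 + 8*x$2*x$5*x$8*x$9^3*e1 + 4*x$2*x$6^3*x$7^2*e1 - 4*x$2*x$6^3*x$8^2*e1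 + 8*x$2*x$6^2*x$7*x$8*x$9*e1 + 4*x$2*x$6*x$7^4*e1 + 4*x$2*x$6*x$7^2*x$9^2*e1 + 4*x$2*x$6*x$7^2*e1*r - 4*x$2*x$6*x$8^4*e1 - 4*x$2*x$6*x$8^2*x$9^2*e1 + 4*x$2*x$6*x$8^2*e1*r + 8*x$2*x$7^3*x$8*x$9*e1 + 8*x$2*x$7*x$8^3*x$9*e1 + 8*x$2*x$7*x$8*x$9^3*e1 - 4*x$3*x$4^4*x$5*e1 - 4*x$3*x$4^4*x$7*e1 + 16*x$3*x$4^3*x$5*x$8*e1 + 16*x$3*x$4^3*x$7*x$8*e1 - 8*x$3*x$4^2*x$5^3*e1 - 24*x$3*x$4^2*x$5^2*x$7*e1 - 4*x$3*x$4^2*x$5*x$6^2*e1 - 24*x$3*x$4^2*x$5*x$7^2*e1 - 24*x$3*x$4^2*x$5*x$8^2*e1 - 4*x$3*x$4^2*x$5*x$9^2*e1 - 4*x$3*x$4^2*x$6^2*x$7*e1 - 8*x$3*x$4^2*x$7^3*e1 - 24*x$3*x$4^2*x$7*x$8^2*e1 - 4*x$3*x$4^2*x$7*x$9^2*e1 + 16*x$3*x$4*x$5^3*x$8*e1 + 48*x$3*x$4*x$5^2*x$7*x$8*e1 + 8*x$3*x$4*x$5*x$6^2*x$8*e1 + 48*x$3*x$4*x$5*x$7^2*x$8*e1 + 16*x$3*x$4*x$5*x$8^3*e1 + 8*x$3*x$4*x$5*x$8*x$9^2*e1 + 8*x$3*x$4*x$6^2*x$7*x$8*e1 + 16*x$3*x$4*x$7^3*x$8*e1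 + 16*x$3*x$4*x$7*x$8^3*e1 + 8*x$3*x$4*x$7*x$8*x$9^2*e1 - 4*x$3*x$5^5*e1 - 20*x$3*x$5^4*x$7*e1 - 4*x$3*x$5^3*x$6^2*e1 - 40*x$3*x$5^3*x$7^2*e1 - 8*x$3*x$5^3*x$8^2*e1 - 4*x$3*x$5^3*x$9^2*e1 - 12*x$3*x$5^2*x$6^2*x$7*e1 - 40*x$3*x$5^2*x$7^3*e1 - 24*x$3*x$5^2*x$7*x$8^2*e1 - 12*x$3*x$5^2*x$7*x$9^2*e1 - 12*x$3*x$5*x$6^2*x$7^2*e1 - 4*x$3*x$5*x$6^2*x$8^2*e1 - 20*x$3*x$5*x$7^4*e1 - 24*x$3*x$5*x$7^2*x$8^2*e1 - 12*x$3*x$5*x$7^2*x$9^2*e1 - 4*x$3*x$5*x$8^4*e1 - 4*x$3*x$5*x$8^2*x$9^2*e1 - 4*x$3*x$6^2*x$7^3*e1 - 4*x$3*x$6^2*x$7*x$8^2*e1 - 4*x$3*x$7^5*e1 - 8*x$3*x$7^3*x$8^2*e1 - 4*x$3*x$7^3*x$9^2*e1 - 4*x$3*x$7*x$8^4*e1 - 4*x$3*x$7*x$8^2*x$9^2*e1 + 4*x$4^5*e0 - 20*x$4^4*x$8*e0 + 8*x$4^3*x$5^2*e0 + 16*x$4^3*x$5*x$7*e0 + 4*x$4^3*x$6^2*e0 + 8*x$4^3*x$7^2*e0 + 40*x$4^3*x$8^2*e0 + 4*x$4^3*x$9^2*e0 - 24*x$4^2*x$5^2*x$8*e0 + 8*x$4^2*x$5^2*e1^2*r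 - 48*x$4^2*x$5*x$7*x$8*e0 + 16*x$4^2*x$5*x$7*e1^2*r - 12*x$4^2*x$6^2*x$8*e0 - 24*x$4^2*x$7^2*x$8*e0 + 8*x$4^2*x$7^2*e1^2*r - 40*x$4^2*x$8^3*e0 - 12*x$4^2*x$8*x$9^2*e0 + 4*x$4*x$5^4*e0 + 16*x$4*x$5^3*x$7*e0 + 4*x$4*x$5^2*x$6^2*e0 + 24*x$4*x$5^2*x$7^2*e0 + 24*x$4*x$5^2*x$8^2*e0 - 16*x$4*x$5^2*x$8*e1^2*r + 4*x$4*x$5^2*x$9^2*e0 + 8*x$4*x$5*x$6^2*x$7*e0 + 16*x$4*x$5*x$7^3*e0 + 48*x$4*x$5*x$7*x$8^2*e0 - 32*x$4*x$5*x$7*x$8*e1^2*r + 8*x$4*x$5*x$7*x$9^2*e0 + 4*x$4*x$6^2*x$7^2*e0 + 12*x$4*x$6^2*x$8^2*e0 + 4*x$4*x$7^4*e0 + 24*x$4*x$7^2*x$8^2*e0 - 16*x$4*x$7^2*x$8*e1^2*r + 4*x$4*x$7^2*x$9^2*e0 + 20*x$4*x$8^4*e0 + 12*x$4*x$8^2*x$9^2*e0 - 4*x$5^4*x$8*e0 + 8*x$5^4*e1^2*r - 16*x$5^3*x$7*x$8*e0 + 32*x$5^3*x$7*e1^2*r - 4*x$5^2*x$6^2*x$8*e0 + 8*x$5^2*x$6^2*e1^2*r - 24*x$5^2*x$7^2*x$8*e0 + 48*x$5^2*x$7^2*e1^2*r - 8*x$5^2*x$8^3*e0 + 8*x$5^2*x$8^2*e1^2*r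 - 4*x$5^2*x$8*x$9^2*e0 + 8*x$5^2*x$9^2*e1^2*r - 8*x$5*x$6^2*x$7*x$8*e0 + 16*x$5*x$6^2*x$7*e1^2*r - 16*x$5*x$7^3*x$8*e0 + 32*x$5*x$7^3*e1^2*r - 16*x$5*x$7*x$8^3*e0 + 16*x$5*x$7*x$8^2*e1^2*r - 8*x$5*x$7*x$8*x$9^2*e0 + 16*x$5*x$7*x$9^2*e1^2*r - 4*x$6^2*x$7^2*x$8*e0 + 8*x$6^2*x$7^2*e1^2*r - 4*x$6^2*x$8^3*e0 - 4*x$7^4*x$8*e0 + 8*x$7^4*e1^2*r - 8*x$7^2*x$8^3*e0 + 8*x$7^2*x$8^2*e1^2*r - 4*x$7^2*x$8*x$9^2*e0 + 8*x$7^2*x$9^2*e1^2*r - 4*x$8^5*e0 - 4*x$8^3*x$9^2*e0)"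

lemma F_poly_numerator:
  "cx1 x * cx2 x * cw3 x - (cx2 x * cz1 x * cw1 x + cx1 x * cz2 x * cw2 x)
     + \<i> * of_real e1 * of_real (a\<^sup>2 - b\<^sup>2) * (cx1 x - cx2 x) = of_real (F_poly e0 e1 (a\<^sup>2 - b\<^sup>2) x)"
proof -
  define u1 where "u1 = x$1/2"
  define u2 where "u2 = x$2/2"
  have u: "x$1 = 2*u1" "x$2 = 2*u2" by (simp_all add: u1_def u2_def)
  show ?thesis
    apply (rule complex_eqI)
     apply (simp_all add: u cx1_def cx2_def cw1_def cw2_def cw3_def cz1_def cz2_def F_poly_def power2_eq_square)
     apply algebra+
    done
qed

lemma F1_poly_numerator:
  "cx2 x ^ 2 * xi1 a b e0 e1 x - cx1 x ^ 2 * xi2 a b e0 e1 x = \<i> * of_real (F1_poly e0 e1 (a\<^sup>2 - b\<^sup>2) x)"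
proof -
  define u1 where "u1 = x$1/2"
  define u2 where "u2 = x$2/2"
  have u: "x$1 = 2*u1" "x$2 = 2*u2" by (simp_all add: u1_def u2_def)
  show ?thesis
    apply (rule complex_eqI)
     apply (simp_all add: u cx1_def cx2_def cw1_def cw2_def cw3_def cz1_def cz2_def xi1_def xi2_def F1_poly_def power2_eq_square)
     apply algebra+
    done
qed

lemma M_poly_numerator:
  "cx2 x ^ 2 * xi1 a b e0 e1 x + cx1 x ^ 2 * xi2 a b e0 e1 x = of_real (M_poly e0 e1 (a\<^sup>2 - b\<^sup>2) x / 2)"
proof -
  define u1 where "u1 = x$1/2"
  define u2 where "u2 = x$2/2"
  have u: "x$1 = 2*u1" "x$2 = 2*u2" by (simp_all add: u1_def u2_def)
  show ?thesis
    apply (rule complex_eqI)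
     apply (simp_all add: u cx1_def cx2_def cw1_def cw2_def cw3_def cz1_def cz2_def xi1_def xi2_def M_poly_def power2_eq_square)
     apply algebra+
    done
qed

lemma L_poly_eq:
  "L_poly e0 e1 r x = r * x1x2 x * ((x$1 - 2*e1*x$9)\<^sup>2 + (x$2 + 2*e1*x$6)\<^sup>2)
     + (x1x2 x + ((x$6)\<^sup>2 + (x$9)\<^sup>2)) * M_poly e0 e1 r x + 4 * e1\<^sup>2 * r * (x1x2 x)\<^sup>2"
  unfolding L_poly_def x1x2_def M_poly_def by algebra

lemma FF_eq_F_poly:
  assumes "x1x2 x \<noteq> 0"
  shows "FF a b e0 e1 x = of_real (F_poly e0 e1 (a\<^sup>2 - b\<^sup>2) x / sqrt (x1x2 x))"
proof -
  define \<rho> where "\<rho> = complex_of_real (sqrt (x1x2 x))"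
  have "0 < x1x2 x" using x1x2_pos[OF assms] .
  then have \<rho>: "\<rho> \<noteq> 0" "\<rho> * \<rho> = cx1 x * cx2 x"
    by (simp_all add: \<rho>_def cx1_mult_cx2 flip: of_real_mult)
  have "FF a b e0 e1 x = (\<rho> * \<rho> * cw3 x - (cx2 x * cz1 x * cw1 x + cx1 x * cz2 x * cw2 x)
      + \<i> * of_real e1 * of_real (a\<^sup>2 - b\<^sup>2) * (cx1 x - cx2 x)) / \<rho>"
    unfolding FF_def csq_eq_sqrt_x1x2 \<rho>_def[symmetric] using \<rho>(1) by (simp add: field_simps)
  also have "\<dots> = of_real (F_poly e0 e1 (a\<^sup>2 - b\<^sup>2) x) / \<rho>"
    by (subst \<rho>(2), subst F_poly_numerator) (rule refl)
  finally show ?thesis by (simp add: \<rho>_def)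
qed

lemma FF1_eq_F1_poly:
  assumes "x1x2 x \<noteq> 0"
  shows "FF1 a b e0 e1 x = \<i> * of_real (F1_poly e0 e1 (a\<^sup>2 - b\<^sup>2) x / x1x2 x)"
proof -
  have "FF1 a b e0 e1 x = (cx2 x ^ 2 * xi1 a b e0 e1 x - cx1 x ^ 2 * xi2 a b e0 e1 x) / (cx1 x * cx2 x)"
    unfolding FF1_def using cx1_cx2_nonzero[OF assms] by (simp add: field_simps power2_eq_square)
  then show ?thesis
    unfolding F1_poly_numerator cx1_mult_cx2 by simp
qed

lemma MMc_eq_M_poly:
  assumes "x1x2 x \<noteq> 0" "a\<^sup>2 - b\<^sup>2 \<noteq> 0"
  shows "MMc a b e0 e1 x = of_real (M_poly e0 e1 (a\<^sup>2 - b\<^sup>2) x / (4 * (a\<^sup>2 - b\<^sup>2) * x1x2 x) + e1\<^sup>2)"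
proof -
  define r where "r = a\<^sup>2 - b\<^sup>2"
  have "r \<noteq> 0" using assms(2) by (simp add: r_def)
  then have nz: "complex_of_real r \<noteq> 0" "complex_of_real (x1x2 x) \<noteq> 0"
    using assms(1) by simp_all
  have "MMc a b e0 e1 x = 1 / (2 * of_real r)
      * ((cx2 x ^ 2 * xi1 a b e0 e1 x + cx1 x ^ 2 * xi2 a b e0 e1 x) / (cx1 x * cx2 x)) + of_real (e1\<^sup>2)"
    unfolding MMc_def r_def[symmetric] using cx1_cx2_nonzero[OF assms(1)] by (simp add: field_simps power2_eq_square)
  also have "\<dots> = of_real (M_poly e0 e1 r x / (4 * r * x1x2 x) + e1\<^sup>2)"
    unfolding M_poly_numerator cx1_mult_cx2 r_def[symmetric] using nz by (simp add: field_simps)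
  finally show ?thesis by (simp add: r_def)
qed

lemma LLc_eq_L_poly:
  assumes "x1x2 x \<noteq> 0" "a\<^sup>2 - b\<^sup>2 \<noteq> 0"
  shows "LLc a b e0 e1 x
    = of_real (L_poly e0 e1 (a\<^sup>2 - b\<^sup>2) x / (4 * (a\<^sup>2 - b\<^sup>2) * x1x2 x * sqrt (x1x2 x)))"
proof -
  define \<rho> where "\<rho> = sqrt (x1x2 x)"
  define r where "r = a\<^sup>2 - b\<^sup>2"
  have "0 < x1x2 x" using x1x2_pos[OF assms(1)] .
  then have \<rho>: "\<rho> \<noteq> 0" "\<rho> * \<rho> = x1x2 x" by (simp_all add: \<rho>_def)
  have r: "r \<noteq> 0" using assms(2) by (simp add: r_def)
  have \<rho>\<^sub>c: "complex_of_real \<rho> * complex_of_real \<rho> = complex_of_real (x1x2 x)"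
    using \<rho>(2) by (simp flip: of_real_mult)
  have "MMc a b e0 e1 x - of_real (e1\<^sup>2) = of_real (M_poly e0 e1 r x / (4 * r * x1x2 x))"
    unfolding MMc_eq_M_poly[OF assms] r_def by simp
  then have "LLc a b e0 e1 x = of_real (1 / \<rho> * (((x$1 - 2*e1*x$9)\<^sup>2 + (x$2 + 2*e1*x$6)\<^sup>2) / 4
      + (x1x2 x + ((x$6)\<^sup>2 + (x$9)\<^sup>2)) * (M_poly e0 e1 r x / (4 * r * x1x2 x))) + e1\<^sup>2 * \<rho>)"
    unfolding LLc_def shifted_w_product csq_eq_sqrt_x1x2 \<rho>_def[symmetric] cx1_mult_cx2 cz1_mult_cz2
    using \<rho>\<^sub>c by simp
  also have "\<dots> = of_real (L_poly e0 e1 r x / (4 * r * x1x2 x * \<rho>))"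
    unfolding L_poly_eq
    by (rule arg_cong[where f = complex_of_real])
      (use \<rho> r assms(1) in \<open>simp add: field_simps power2_eq_square\<close>)
  finally show ?thesis by (simp add: \<rho>_def r_def)
qed

definition Phi2_scale :: "real \<Rightarrow> real^9 \<Rightarrow> real" where
  "Phi2_scale r x = inverse (4 * r * (x1x2 x)\<^sup>2)"

lemma Phi2_eq_polys:
  assumes "x1x2 x \<noteq> 0" "r = a\<^sup>2 - b\<^sup>2" "r \<noteq> 0"
  shows "Phi2 a b e0 e1 x
    = - (F1_poly e0 e1 r x * (r * F1_poly e0 e1 r x) + F_poly e0 e1 r x * (F_poly e0 e1 r x * M_poly e0 e1 r x))
      * Phi2_scale r x"
proof -
  have "0 < x1x2 x" using x1x2_pos[OF assms(1)] .
  then have \<rho>: "sqrt (x1x2 x) \<noteq> 0" "sqrt (x1x2 x) * sqrt (x1x2 x) = x1x2 x" by simp_all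
  have "Phi2c a b e0 e1 x = of_real (- ((F1_poly e0 e1 r x / x1x2 x)\<^sup>2) / 4
      - (F_poly e0 e1 r x / sqrt (x1x2 x))\<^sup>2 * (M_poly e0 e1 r x / (4 * r * x1x2 x)))"
    unfolding Phi2c_def FF_eq_F_poly[OF assms(1)] FF1_eq_F1_poly[OF assms(1)]
      MMc_eq_M_poly[OF assms(1) assms(3)[unfolded assms(2)]] assms(2)
    by (simp add: power_mult_distrib power_divide)
  then have "Phi2 a b e0 e1 x = - ((F1_poly e0 e1 r x / x1x2 x)\<^sup>2) / 4
      - (F_poly e0 e1 r x / sqrt (x1x2 x))\<^sup>2 * (M_poly e0 e1 r x / (4 * r * x1x2 x))"
    by (simp add: Phi2_def)
  also have "\<dots> = - (F1_poly e0 e1 r x * (r * F1_poly e0 e1 r x)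
      + F_poly e0 e1 r x * (F_poly e0 e1 r x * M_poly e0 e1 r x)) * Phi2_scale r x"
    unfolding Phi2_scale_def using \<rho> assms(1,3) by (simp add: field_simps power2_eq_square)
  finally show ?thesis .
qed

subsection \<open>The linearization of \<open>sgrad \<Phi>\<^sub>2\<close> where \<open>F\<close> and \<open>F\<^sub>1\<close> vanish\<close>

definition dF_poly :: "real \<Rightarrow> real \<Rightarrow> real \<Rightarrow> real^9 \<Rightarrow> real^9 \<Rightarrow> real" where
  "dF_poly e0 e1 r x v = v$1 * (0 - x$4*x$6 - x$5*x$9 + x$6*x$8 - x$7*x$9) + v$2 * (x$4*x$9 - x$5*x$6 - x$6*x$7 - x$8*x$9) + v$3 * (x$4^2 - 2*x$4*x$8 + x$5^2 + 2*x$5*x$7 + x$7^2 + x$8^2) + v$4 * (0 - x$1*x$6 + x$2*x$9 + 2*x$3*x$4 - 2*x$3*x$8) + v$5 * (0 - x$1*x$9 - x$2*x$6 + 2*x$3*x$5 + 2*x$3*x$7 - 2*e1*r) + v$6 * (0 - x$1*x$4 + x$1*x$8 - x$2*x$5 - x$2*x$7) + v$7 * (0 - x$1*x$9 - x$2*x$6 + 2*x$3*x$5 + 2*x$3*x$7 - 2*e1*r) + v$8 * (x$1*x$6 - x$2*x$9 - 2*x$3*x$4 + 2*x$3*x$8) + v$9 * (0 - x$1*x$5 - x$1*x$7 + x$2*x$4 - x$2*x$8)"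

definition dF1_poly :: "real \<Rightarrow> real \<Rightarrow> real \<Rightarrow> real^9 \<Rightarrow> real^9 \<Rightarrow> real" where
  "dF1_poly e0 e1 r x v = v$1 * (0 - 2*x$1*x$4*x$5 - 2*x$1*x$4*x$7 + 2*x$1*x$5*x$8 + 2*x$1*x$7*x$8 + x$2*x$4^2 - 2*x$2*x$4*x$8 - x$2*x$5^2 - 2*x$2*x$5*x$7 - x$2*x$7^2 + x$2*x$8^2 + 2*x$4^2*x$6*e1 + 4*x$4*x$5*x$9*e1 - 4*x$4*x$6*x$8*e1 + 4*x$4*x$7*x$9*e1 - 2*x$5^2*x$6*e1 - 4*x$5*x$6*x$7*e1 - 4*x$5*x$8*x$9*e1 - 2*x$6*x$7^2*e1 + 2*x$6*x$8^2*e1 - 4*x$7*x$8*x$9*e1) + v$2 * (x$1*x$4^2 - 2*x$1*x$4*x$8 - x$1*x$5^2 - 2*x$1*x$5*x$7 - x$1*x$7^2 + x$1*x$8^2 + 2*x$2*x$4*x$5 + 2*x$2*x$4*x$7 - 2*x$2*x$5*x$8 - 2*x$2*x$7*x$8 - 2*x$4^2*x$9*e1 + 4*x$4*x$5*x$6*e1 + 4*x$4*x$6*x$7*e1 + 4*x$4*x$8*x$9*e1 + 2*x$5^2*x$9*e1 - 4*x$5*x$6*x$8*e1 + 4*x$5*x$7*x$9*e1 - 4*x$6*x$7*x$8*e1 + 2*x$7^2*x$9*e1 - 2*x$8^2*x$9*e1) + v$3 * (0 - 2*x$4^3*e1 + 6*x$4^2*x$8*e1 - 2*x$4*x$5^2*e1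 - 4*x$4*x$5*x$7*e1 - 2*x$4*x$7^2*e1 - 6*x$4*x$8^2*e1 + 2*x$5^2*x$8*e1 + 4*x$5*x$7*x$8*e1 + 2*x$7^2*x$8*e1 + 2*x$8^3*e1) + v$4 * (0 - x$1^2*x$5 - x$1^2*x$7 + 2*x$1*x$2*x$4 - 2*x$1*x$2*x$8 + 4*x$1*x$4*x$6*e1 + 4*x$1*x$5*x$9*e1 - 4*x$1*x$6*x$8*e1 + 4*x$1*x$7*x$9*e1 + x$2^2*x$5 + x$2^2*x$7 - 4*x$2*x$4*x$9*e1 + 4*x$2*x$5*x$6*e1 + 4*x$2*x$6*x$7*e1 + 4*x$2*x$8*x$9*e1 - 6*x$3*x$4^2*e1 + 12*x$3*x$4*x$8*e1 - 2*x$3*x$5^2*e1 - 4*x$3*x$5*x$7*e1 - 2*x$3*x$7^2*e1 - 6*x$3*x$8^2*e1 - 4*x$4*x$5*e0 - 4*x$4*x$7*e0 + 4*x$5*x$8*e0 + 4*x$5*e1^2*r + 4*x$7*x$8*e0 + 4*x$7*e1^2*r) + v$5 * (0 - x$1^2*x$4 + x$1^2*x$8 - 2*x$1*x$2*x$5 - 2*x$1*x$2*x$7 + 4*x$1*x$4*x$9*e1 - 4*x$1*x$5*x$6*e1 - 4*x$1*x$6*x$7*e1 - 4*x$1*x$8*x$9*e1 + x$2^2*x$4 - x$2^2*x$8 + 4*x$2*x$4*x$6*e1 + 4*x$2*x$5*x$9*e1 - 4*x$2*x$6*x$8*e1 + 4*x$2*x$7*x$9*e1 - 4*x$3*x$4*x$5*e1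 - 4*x$3*x$4*x$7*e1 + 4*x$3*x$5*x$8*e1 + 4*x$3*x$7*x$8*e1 - 2*x$4^2*e0 + 4*x$4*x$8*e0 + 4*x$4*e1^2*r - 6*x$5^2*e0 - 12*x$5*x$7*e0 - 6*x$7^2*e0 - 2*x$8^2*e0 - 4*x$8*e1^2*r) + v$6 * (2*x$1*x$4^2*e1 - 4*x$1*x$4*x$8*e1 - 2*x$1*x$5^2*e1 - 4*x$1*x$5*x$7*e1 - 2*x$1*x$7^2*e1 + 2*x$1*x$8^2*e1 + 4*x$2*x$4*x$5*e1 + 4*x$2*x$4*x$7*e1 - 4*x$2*x$5*x$8*e1 - 4*x$2*x$7*x$8*e1) + v$7 * (0 - x$1^2*x$4 + x$1^2*x$8 - 2*x$1*x$2*x$5 - 2*x$1*x$2*x$7 + 4*x$1*x$4*x$9*e1 - 4*x$1*x$5*x$6*e1 - 4*x$1*x$6*x$7*e1 - 4*x$1*x$8*x$9*e1 + x$2^2*x$4 - x$2^2*x$8 + 4*x$2*x$4*x$6*e1 + 4*x$2*x$5*x$9*e1 - 4*x$2*x$6*x$8*e1 + 4*x$2*x$7*x$9*e1 - 4*x$3*x$4*x$5*e1 - 4*x$3*x$4*x$7*e1 + 4*x$3*x$5*x$8*e1 + 4*x$3*x$7*x$8*e1 - 2*x$4^2*e0 + 4*x$4*x$8*e0 + 4*x$4*e1^2*r - 6*x$5^2*e0 - 12*x$5*x$7*e0 - 6*x$7^2*e0 - 2*x$8^2*e0 - 4*x$8*e1^2*r) + v$8 * (x$1^2*x$5 + x$1^2*x$7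 - 2*x$1*x$2*x$4 + 2*x$1*x$2*x$8 - 4*x$1*x$4*x$6*e1 - 4*x$1*x$5*x$9*e1 + 4*x$1*x$6*x$8*e1 - 4*x$1*x$7*x$9*e1 - x$2^2*x$5 - x$2^2*x$7 + 4*x$2*x$4*x$9*e1 - 4*x$2*x$5*x$6*e1 - 4*x$2*x$6*x$7*e1 - 4*x$2*x$8*x$9*e1 + 6*x$3*x$4^2*e1 - 12*x$3*x$4*x$8*e1 + 2*x$3*x$5^2*e1 + 4*x$3*x$5*x$7*e1 + 2*x$3*x$7^2*e1 + 6*x$3*x$8^2*e1 + 4*x$4*x$5*e0 + 4*x$4*x$7*e0 - 4*x$5*x$8*e0 - 4*x$5*e1^2*r - 4*x$7*x$8*e0 - 4*x$7*e1^2*r) + v$9 * (4*x$1*x$4*x$5*e1 + 4*x$1*x$4*x$7*e1 - 4*x$1*x$5*x$8*e1 - 4*x$1*x$7*x$8*e1 - 2*x$2*x$4^2*e1 + 4*x$2*x$4*x$8*e1 + 2*x$2*x$5^2*e1 + 4*x$2*x$5*x$7*e1 + 2*x$2*x$7^2*e1 - 2*x$2*x$8^2*e1)"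

definition dM_poly :: "real \<Rightarrow> real \<Rightarrow> real \<Rightarrow> real^9 \<Rightarrow> real^9 \<Rightarrow> real" where
  "dM_poly e0 e1 r x v = v$1 * (2*x$1*x$4^2 - 4*x$1*x$4*x$8 - 2*x$1*x$5^2 - 4*x$1*x$5*x$7 - 2*x$1*x$7^2 + 2*x$1*x$8^2 + 4*x$2*x$4*x$5 + 4*x$2*x$4*x$7 - 4*x$2*x$5*x$8 - 4*x$2*x$7*x$8 - 4*x$4^2*x$9*e1 + 8*x$4*x$5*x$6*e1 + 8*x$4*x$6*x$7*e1 + 8*x$4*x$8*x$9*e1 + 4*x$5^2*x$9*e1 - 8*x$5*x$6*x$8*e1 + 8*x$5*x$7*x$9*e1 - 8*x$6*x$7*x$8*e1 + 4*x$7^2*x$9*e1 - 4*x$8^2*x$9*e1) + v$2 * (4*x$1*x$4*x$5 + 4*x$1*x$4*x$7 - 4*x$1*x$5*x$8 - 4*x$1*x$7*x$8 - 2*x$2*x$4^2 + 4*x$2*x$4*x$8 + 2*x$2*x$5^2 + 4*x$2*x$5*x$7 + 2*x$2*x$7^2 - 2*x$2*x$8^2 - 4*x$4^2*x$6*e1 - 8*x$4*x$5*x$9*e1 + 8*x$4*x$6*x$8*e1 - 8*x$4*x$7*x$9*e1 + 4*x$5^2*x$6*e1 + 8*x$5*x$6*x$7*e1 + 8*x$5*x$8*x$9*e1 + 4*x$6*x$7^2*e1 - 4*x$6*x$8^2*e1 + 8*x$7*x$8*x$9*e1) + v$3 * (0 - 4*x$4^2*x$5*e1 - 4*x$4^2*x$7*e1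 + 8*x$4*x$5*x$8*e1 + 8*x$4*x$7*x$8*e1 - 4*x$5^3*e1 - 12*x$5^2*x$7*e1 - 12*x$5*x$7^2*e1 - 4*x$5*x$8^2*e1 - 4*x$7^3*e1 - 4*x$7*x$8^2*e1) + v$4 * (2*x$1^2*x$4 - 2*x$1^2*x$8 + 4*x$1*x$2*x$5 + 4*x$1*x$2*x$7 - 8*x$1*x$4*x$9*e1 + 8*x$1*x$5*x$6*e1 + 8*x$1*x$6*x$7*e1 + 8*x$1*x$8*x$9*e1 - 2*x$2^2*x$4 + 2*x$2^2*x$8 - 8*x$2*x$4*x$6*e1 - 8*x$2*x$5*x$9*e1 + 8*x$2*x$6*x$8*e1 - 8*x$2*x$7*x$9*e1 - 8*x$3*x$4*x$5*e1 - 8*x$3*x$4*x$7*e1 + 8*x$3*x$5*x$8*e1 + 8*x$3*x$7*x$8*e1 + 12*x$4^2*e0 - 24*x$4*x$8*e0 - 8*x$4*e1^2*r + 4*x$5^2*e0 + 8*x$5*x$7*e0 + 4*x$7^2*e0 + 12*x$8^2*e0 + 8*x$8*e1^2*r) + v$5 * (0 - 2*x$1^2*x$5 - 2*x$1^2*x$7 + 4*x$1*x$2*x$4 - 4*x$1*x$2*x$8 + 8*x$1*x$4*x$6*e1 + 8*x$1*x$5*x$9*e1 - 8*x$1*x$6*x$8*e1 + 8*x$1*x$7*x$9*e1 + 2*x$2^2*x$5 + 2*x$2^2*x$7 - 8*x$2*x$4*x$9*e1 + 8*x$2*x$5*x$6*e1 + 8*x$2*x$6*x$7*e1 + 8*x$2*x$8*x$9*e1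 - 4*x$3*x$4^2*e1 + 8*x$3*x$4*x$8*e1 - 12*x$3*x$5^2*e1 - 24*x$3*x$5*x$7*e1 - 12*x$3*x$7^2*e1 - 4*x$3*x$8^2*e1 + 8*x$4*x$5*e0 + 8*x$4*x$7*e0 - 8*x$5*x$8*e0 + 8*x$5*e1^2*r - 8*x$7*x$8*e0 + 8*x$7*e1^2*r) + v$6 * (8*x$1*x$4*x$5*e1 + 8*x$1*x$4*x$7*e1 - 8*x$1*x$5*x$8*e1 - 8*x$1*x$7*x$8*e1 - 4*x$2*x$4^2*e1 + 8*x$2*x$4*x$8*e1 + 4*x$2*x$5^2*e1 + 8*x$2*x$5*x$7*e1 + 4*x$2*x$7^2*e1 - 4*x$2*x$8^2*e1) + v$7 * (0 - 2*x$1^2*x$5 - 2*x$1^2*x$7 + 4*x$1*x$2*x$4 - 4*x$1*x$2*x$8 + 8*x$1*x$4*x$6*e1 + 8*x$1*x$5*x$9*e1 - 8*x$1*x$6*x$8*e1 + 8*x$1*x$7*x$9*e1 + 2*x$2^2*x$5 + 2*x$2^2*x$7 - 8*x$2*x$4*x$9*e1 + 8*x$2*x$5*x$6*e1 + 8*x$2*x$6*x$7*e1 + 8*x$2*x$8*x$9*e1 - 4*x$3*x$4^2*e1 + 8*x$3*x$4*x$8*e1 - 12*x$3*x$5^2*e1 - 24*x$3*x$5*x$7*e1 - 12*x$3*x$7^2*e1 - 4*x$3*x$8^2*e1 + 8*x$4*x$5*e0 + 8*x$4*x$7*e0 - 8*x$5*x$8*e0 + 8*x$5*e1^2*r - 8*x$7*x$8*e0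 + 8*x$7*e1^2*r) + v$8 * (0 - 2*x$1^2*x$4 + 2*x$1^2*x$8 - 4*x$1*x$2*x$5 - 4*x$1*x$2*x$7 + 8*x$1*x$4*x$9*e1 - 8*x$1*x$5*x$6*e1 - 8*x$1*x$6*x$7*e1 - 8*x$1*x$8*x$9*e1 + 2*x$2^2*x$4 - 2*x$2^2*x$8 + 8*x$2*x$4*x$6*e1 + 8*x$2*x$5*x$9*e1 - 8*x$2*x$6*x$8*e1 + 8*x$2*x$7*x$9*e1 + 8*x$3*x$4*x$5*e1 + 8*x$3*x$4*x$7*e1 - 8*x$3*x$5*x$8*e1 - 8*x$3*x$7*x$8*e1 - 12*x$4^2*e0 + 24*x$4*x$8*e0 + 8*x$4*e1^2*r - 4*x$5^2*e0 - 8*x$5*x$7*e0 - 4*x$7^2*e0 - 12*x$8^2*e0 - 8*x$8*e1^2*r) + v$9 * (0 - 4*x$1*x$4^2*e1 + 8*x$1*x$4*x$8*e1 + 4*x$1*x$5^2*e1 + 8*x$1*x$5*x$7*e1 + 4*x$1*x$7^2*e1 - 4*x$1*x$8^2*e1 - 8*x$2*x$4*x$5*e1 - 8*x$2*x$4*x$7*e1 + 8*x$2*x$5*x$8*e1 + 8*x$2*x$7*x$8*e1)"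

definition grad_F_poly :: "real \<Rightarrow> real \<Rightarrow> real \<Rightarrow> real^9 \<Rightarrow> real^9" where
  "grad_F_poly e0 e1 r x = (\<chi> i. dF_poly e0 e1 r x (axis i 1))"

definition grad_F1_poly :: "real \<Rightarrow> real \<Rightarrow> real \<Rightarrow> real^9 \<Rightarrow> real^9" where
  "grad_F1_poly e0 e1 r x = (\<chi> i. dF1_poly e0 e1 r x (axis i 1))"

lemma has_derivative_F_poly: "(F_poly e0 e1 r has_derivative dF_poly e0 e1 r x) (at x)"
  unfolding F_poly_def[abs_def]
  apply (rule has_derivative_eq_rhs)
   apply (rule derivative_intros)+
  apply (rule ext)
  apply (simp add: dF_poly_def)
  apply algebra
  done

lemma has_derivative_F1_poly: "(F1_poly e0 e1 r has_derivative dF1_poly e0 e1 r x) (at x)"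
  unfolding F1_poly_def[abs_def]
  apply (rule has_derivative_eq_rhs)
   apply (rule derivative_intros)+
  apply (rule ext)
  apply (simp add: dF1_poly_def)
  apply algebra
  done

lemma has_derivative_M_poly: "(M_poly e0 e1 r has_derivative dM_poly e0 e1 r x) (at x)"
  unfolding M_poly_def[abs_def]
  apply (rule has_derivative_eq_rhs)
   apply (rule derivative_intros)+
  apply (rule ext)
  apply (simp add: dM_poly_def)
  apply algebra
  done

lemma dF_poly_eq_inner: "dF_poly e0 e1 r x v = grad_F_poly e0 e1 r x \<bullet> v"
  by (simp add: grad_F_poly_def dF_poly_def inner_vec_def sum_9 axis_def algebra_simps)

lemma dF1_poly_eq_inner: "dF1_poly e0 e1 r x v = grad_F1_poly e0 e1 r x \<bullet> v"
  by (simp add: grad_F1_poly_def dF1_poly_def inner_vec_def sum_9 axis_def algebra_simps)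

lemma has_derivative_x1x2:
  "(x1x2 has_derivative (\<lambda>v. 2 * ((x$4 - x$8) * (v$4 - v$8) + (x$5 + x$7) * (v$5 + v$7)))) (at x)"
  unfolding x1x2_def[abs_def]
  by (rule has_derivative_eq_rhs, (rule derivative_intros)+) (simp add: fun_eq_iff algebra_simps)

definition dPhi2_scale :: "real \<Rightarrow> real^9 \<Rightarrow> real^9 \<Rightarrow> real" where
  "dPhi2_scale r x v = - ((x$4 - x$8) * (v$4 - v$8) + (x$5 + x$7) * (v$5 + v$7)) / (r * (x1x2 x)^3)"

lemma has_derivative_Phi2_scale:
  assumes "x1x2 x \<noteq> 0" "r \<noteq> 0"
  shows "(Phi2_scale r has_derivative dPhi2_scale r x) (at x)"
  unfolding Phi2_scale_def[abs_def]
  apply (rule has_derivative_eq_rhs)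
   apply (rule Deriv.has_derivative_inverse)
    using assms apply simp
   apply (rule derivative_intros has_derivative_x1x2)+
  apply (rule ext)
  using assms apply (simp add: dPhi2_scale_def field_simps power2_eq_square power3_eq_cube)
  done

text \<open>Differentiating \<open>\<Phi>\<^sub>2 = -(r g\<^sup>2 + p f\<^sup>2) K\<close> gives \<open>d\<Phi>\<^sub>2 = g A + f B\<close> with these cofactors.\<close>

definition Phi2_cofactor_F1 :: "real \<Rightarrow> real \<Rightarrow> real \<Rightarrow> real^9 \<Rightarrow> real^9 \<Rightarrow> real" where
  "Phi2_cofactor_F1 e0 e1 r x v
     = - (2 * r * dF1_poly e0 e1 r x v) * Phi2_scale r x - r * F1_poly e0 e1 r x * dPhi2_scale r x v"

definition Phi2_cofactor_F :: "real \<Rightarrow> real \<Rightarrow> real \<Rightarrow> real^9 \<Rightarrow> real^9 \<Rightarrow> real" where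
  "Phi2_cofactor_F e0 e1 r x v
     = - (2 * M_poly e0 e1 r x * dF_poly e0 e1 r x v + F_poly e0 e1 r x * dM_poly e0 e1 r x v) * Phi2_scale r x
       - F_poly e0 e1 r x * M_poly e0 e1 r x * dPhi2_scale r x v"

lemma open_x1x2_nonzero: "open {x. x1x2 x \<noteq> 0}"
  by (rule open_Collect_neq) (simp_all add: x1x2_def[abs_def] continuous_intros)

lemma has_derivative_Phi2:
  assumes "x1x2 x \<noteq> 0" "r = a\<^sup>2 - b\<^sup>2" "r \<noteq> 0"
  shows "(Phi2 a b e0 e1 has_derivative
    (\<lambda>v. F1_poly e0 e1 r x * Phi2_cofactor_F1 e0 e1 r x v + F_poly e0 e1 r x * Phi2_cofactor_F e0 e1 r x v)) (at x)"
proof -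
  have "((\<lambda>y. - (F1_poly e0 e1 r y * (r * F1_poly e0 e1 r y) + F_poly e0 e1 r y * (F_poly e0 e1 r y * M_poly e0 e1 r y))
        * Phi2_scale r y)
      has_derivative (\<lambda>v. F1_poly e0 e1 r x * Phi2_cofactor_F1 e0 e1 r x v
        + F_poly e0 e1 r x * Phi2_cofactor_F e0 e1 r x v)) (at x)"
    apply (rule has_derivative_eq_rhs)
     apply (rule derivative_intros has_derivative_F1_poly has_derivative_F_poly has_derivative_M_poly
        has_derivative_Phi2_scale[OF assms(1,3)])+
    apply (rule ext)
    apply (simp add: Phi2_cofactor_F1_def Phi2_cofactor_F_def)
    apply algebra
    done
  then show ?thesis
    by (rule has_derivative_transform_within_open[OF _ open_x1x2_nonzero])
      (use assms Phi2_eq_polys in auto)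
qed

lemma pd_Phi2:
  assumes "x1x2 x \<noteq> 0" "r = a\<^sup>2 - b\<^sup>2" "r \<noteq> 0"
  shows "pd (Phi2 a b e0 e1) i x
    = F1_poly e0 e1 r x * Phi2_cofactor_F1 e0 e1 r x (axis i 1) + F_poly e0 e1 r x * Phi2_cofactor_F e0 e1 r x (axis i 1)"
  unfolding pd_def frechet_derivative_at[OF has_derivative_Phi2[OF assms], symmetric] by simp

lemma differentiable_Phi2_cofactors:
  assumes "x1x2 s \<noteq> 0" "r \<noteq> 0"
  shows "(\<lambda>x. Phi2_cofactor_F1 e0 e1 r x v) differentiable (at s)"
    and "(\<lambda>x. Phi2_cofactor_F e0 e1 r x v) differentiable (at s)"
proof -
  have polys: "F_poly e0 e1 r differentiable (at s)" "F1_poly e0 e1 r differentiable (at s)"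
      "M_poly e0 e1 r differentiable (at s)"
    using has_derivative_F_poly has_derivative_F1_poly has_derivative_M_poly differentiableI by blast+
  have K: "Phi2_scale r differentiable (at s)"
    using has_derivative_Phi2_scale[OF assms] differentiableI by blast
  have dK: "(\<lambda>x. dPhi2_scale r x v) differentiable (at s)"
    using assms by (simp add: dPhi2_scale_def x1x2_def)
  have dpolys: "(\<lambda>x. dF_poly e0 e1 r x v) differentiable (at s)" "(\<lambda>x. dF1_poly e0 e1 r x v) differentiable (at s)"
      "(\<lambda>x. dM_poly e0 e1 r x v) differentiable (at s)"
    by (simp_all add: dF_poly_def dF1_poly_def dM_poly_def)
  show "(\<lambda>x. Phi2_cofactor_F1 e0 e1 r x v) differentiable (at s)"
    unfolding Phi2_cofactor_F1_def using polys K dK dpolys by simp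
  show "(\<lambda>x. Phi2_cofactor_F e0 e1 r x v) differentiable (at s)"
    unfolding Phi2_cofactor_F_def using polys K dK dpolys by simp
qed

lemma has_derivative_sgrad_Phi2_at_zero:
  assumes r: "r = a\<^sup>2 - b\<^sup>2" "r \<noteq> 0" and s: "x1x2 s \<noteq> 0"
    and f: "F_poly e0 e1 r s = 0" and g: "F1_poly e0 e1 r s = 0"
  defines "P \<equiv> grad_F1_poly e0 e1 r s" and "Q \<equiv> grad_F_poly e0 e1 r s"
  shows "(sgrad (Phi2 a b e0 e1) has_derivative
    (\<lambda>v. lp_field s (\<lambda>i. (- 2 * r * Phi2_scale r s) * (P \<bullet> v) * P$i
      + (- 2 * M_poly e0 e1 r s * Phi2_scale r s) * (Q \<bullet> v) * Q$i))) (at s)"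
proof -
  define G where "G i x = F1_poly e0 e1 r x * Phi2_cofactor_F1 e0 e1 r x (axis i 1)
    + F_poly e0 e1 r x * Phi2_cofactor_F e0 e1 r x (axis i 1)" for i x
  define dG where "dG i v = dF1_poly e0 e1 r s v * Phi2_cofactor_F1 e0 e1 r s (axis i 1)
    + dF_poly e0 e1 r s v * Phi2_cofactor_F e0 e1 r s (axis i 1)" for i v
  have "(G i has_derivative dG i) (at s)" for i
    unfolding G_def dG_def
    by (intro has_derivative_add has_derivative_mult_vanishing has_derivative_F1_poly has_derivative_F_poly
        differentiable_Phi2_cofactors[OF s r(2)] f g)
  moreover have "G i s = 0" for i
    by (simp add: G_def f g)
  ultimately have lin: "((\<lambda>x. lp_field x (\<lambda>i. G i x)) has_derivative (\<lambda>v. lp_field s (\<lambda>i. dG i v))) (at s)"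
    by (rule has_derivative_lp_field_vanishing)
  have "sgrad (Phi2 a b e0 e1) x = lp_field x (\<lambda>i. G i x)" if "x \<in> {x. x1x2 x \<noteq> 0}" for x
    using that unfolding sgrad_eq_lp_field G_def by (simp add: pd_Phi2[OF _ r(1,2)])
  then have "(sgrad (Phi2 a b e0 e1) has_derivative (\<lambda>v. lp_field s (\<lambda>i. dG i v))) (at s)"
    by (intro has_derivative_transform_within_open[OF lin open_x1x2_nonzero]) (use s in auto)
  moreover have "dG i v = (- 2 * r * Phi2_scale r s) * (P \<bullet> v) * P$i
      + (- 2 * M_poly e0 e1 r s * Phi2_scale r s) * (Q \<bullet> v) * Q$i" for i v
    by (simp add: dG_def Phi2_cofactor_F1_def Phi2_cofactor_F_def f g P_def Q_def
        dF1_poly_eq_inner[of _ _ _ s] dF_poly_eq_inner[of _ _ _ s] inner_axis algebra_simps)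
  ultimately show ?thesis by simp
qed

subsection \<open>The bracket \<open>{g, f}\<close> on \<open>\<P>\<^sup>6\<close>\<close>

lemma P6_iff:
  "x \<in> P6 a b \<longleftrightarrow> (x$4)\<^sup>2 + (x$5)\<^sup>2 + (x$6)\<^sup>2 = a\<^sup>2 \<and> (x$7)\<^sup>2 + (x$8)\<^sup>2 + (x$9)\<^sup>2 = b\<^sup>2
    \<and> x$4 * x$7 + x$5 * x$8 + x$6 * x$9 = 0"
  by (simp add: P6_def alv_def bev_def inner_vec_def sum_3 power2_eq_square)

text \<open>Multipliers exhibiting \<open>x\<^sub>1x\<^sub>2 (2{g, f} - L_poly)\<close> as a combination of \<open>f\<close>,
  \<open>r - (\<alpha>\<^sup>2 - \<beta>\<^sup>2)\<close> and \<open>\<alpha>\<cdot>\<beta>\<close>.\<close>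

definition bracket_cert_D :: "real \<Rightarrow> real \<Rightarrow> real \<Rightarrow> real^9 \<Rightarrow> real" where
  "bracket_cert_D e0 e1 r x = (0 - x$1^2*x$4^2 + 2*x$1^2*x$4*x$8 - x$1^2*x$5^2 - 2*x$1^2*x$5*x$7 - x$1^2*x$7^2 - x$1^2*x$8^2 - 8*x$1*x$4*x$5*x$6*e1 - 8*x$1*x$4*x$6*x$7*e1 + 8*x$1*x$5^2*x$9*e1 + 8*x$1*x$5*x$6*x$8*e1 + 16*x$1*x$5*x$7*x$9*e1 + 8*x$1*x$6*x$7*x$8*e1 + 8*x$1*x$7^2*x$9*e1 - x$2^2*x$4^2 + 2*x$2^2*x$4*x$8 - x$2^2*x$5^2 - 2*x$2^2*x$5*x$7 - x$2^2*x$7^2 - x$2^2*x$8^2 - 8*x$2*x$4*x$5*x$9*e1 - 8*x$2*x$4*x$7*x$9*e1 - 8*x$2*x$5^2*x$6*e1 - 16*x$2*x$5*x$6*x$7*e1 + 8*x$2*x$5*x$8*x$9*e1 - 8*x$2*x$6*x$7^2*e1 + 8*x$2*x$7*x$8*x$9*e1 - 8*x$5^2*x$6^2*e1^2 - 8*x$5^2*x$9^2*e1^2 - 16*x$5*x$6^2*x$7*e1^2 - 16*x$5*x$7*x$9^2*e1^2 - 8*x$6^2*x$7^2*e1^2 - 8*x$7^2*x$9^2*e1^2)"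

definition bracket_cert_E :: "real \<Rightarrow> real \<Rightarrow> real \<Rightarrow> real^9 \<Rightarrow> real" where
  "bracket_cert_E e0 e1 r x = (2*x$1*x$4^3*x$6 - 2*x$1*x$4^2*x$5*x$9 - 6*x$1*x$4^2*x$6*x$8 - 2*x$1*x$4^2*x$7*x$9 + 2*x$1*x$4*x$5^2*x$6 + 4*x$1*x$4*x$5*x$6*x$7 + 4*x$1*x$4*x$5*x$8*x$9 + 2*x$1*x$4*x$6*x$7^2 + 6*x$1*x$4*x$6*x$8^2 + 4*x$1*x$4*x$7*x$8*x$9 - 2*x$1*x$5^3*x$9 - 2*x$1*x$5^2*x$6*x$8 - 6*x$1*x$5^2*x$7*x$9 - 4*x$1*x$5*x$6*x$7*x$8 - 6*x$1*x$5*x$7^2*x$9 - 2*x$1*x$5*x$8^2*x$9 - 2*x$1*x$6*x$7^2*x$8 - 2*x$1*x$6*x$8^3 - 2*x$1*x$7^3*x$9 - 2*x$1*x$7*x$8^2*x$9 + 2*x$2*x$4^3*x$9 + 2*x$2*x$4^2*x$5*x$6 + 2*x$2*x$4^2*x$6*x$7 - 6*x$2*x$4^2*x$8*x$9 + 2*x$2*x$4*x$5^2*x$9 - 4*x$2*x$4*x$5*x$6*x$8 + 4*x$2*x$4*x$5*x$7*x$9 - 4*x$2*x$4*x$6*x$7*x$8 + 2*x$2*x$4*x$7^2*x$9 + 6*x$2*x$4*x$8^2*x$9 + 2*x$2*x$5^3*x$6 + 6*x$2*x$5^2*x$6*x$7 - 2*x$2*x$5^2*x$8*x$9 + 6*x$2*x$5*x$6*x$7^2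 + 2*x$2*x$5*x$6*x$8^2 - 4*x$2*x$5*x$7*x$8*x$9 + 2*x$2*x$6*x$7^3 + 2*x$2*x$6*x$7*x$8^2 - 2*x$2*x$7^2*x$8*x$9 - 2*x$2*x$8^3*x$9 + 4*x$4^2*x$5*x$6^2*e1 + 4*x$4^2*x$5*x$9^2*e1 + 4*x$4^2*x$6^2*x$7*e1 + 4*x$4^2*x$7*x$9^2*e1 - 8*x$4*x$5*x$6^2*x$8*e1 - 8*x$4*x$5*x$8*x$9^2*e1 - 8*x$4*x$6^2*x$7*x$8*e1 - 8*x$4*x$7*x$8*x$9^2*e1 + 4*x$5^3*x$6^2*e1 + 4*x$5^3*x$9^2*e1 + 12*x$5^2*x$6^2*x$7*e1 + 12*x$5^2*x$7*x$9^2*e1 + 12*x$5*x$6^2*x$7^2*e1 + 4*x$5*x$6^2*x$8^2*e1 + 12*x$5*x$7^2*x$9^2*e1 + 4*x$5*x$8^2*x$9^2*e1 + 4*x$6^2*x$7^3*e1 + 4*x$6^2*x$7*x$8^2*e1 + 4*x$7^3*x$9^2*e1 + 4*x$7*x$8^2*x$9^2*e1)"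

definition bracket_cert_Q :: "real \<Rightarrow> real \<Rightarrow> real \<Rightarrow> real^9 \<Rightarrow> real" where
  "bracket_cert_Q e0 e1 r x = (8*x$1*x$4^3*x$5*x$9*e1 + 8*x$1*x$4^3*x$7*x$9*e1 + 8*x$1*x$4^2*x$5^2*x$6*e1 + 16*x$1*x$4^2*x$5*x$6*x$7*e1 - 24*x$1*x$4^2*x$5*x$8*x$9*e1 + 8*x$1*x$4^2*x$6*x$7^2*e1 - 24*x$1*x$4^2*x$7*x$8*x$9*e1 + 8*x$1*x$4*x$5^3*x$9*e1 - 16*x$1*x$4*x$5^2*x$6*x$8*e1 + 24*x$1*x$4*x$5^2*x$7*x$9*e1 - 32*x$1*x$4*x$5*x$6*x$7*x$8*e1 + 24*x$1*x$4*x$5*x$7^2*x$9*e1 + 24*x$1*x$4*x$5*x$8^2*x$9*e1 - 16*x$1*x$4*x$6*x$7^2*x$8*e1 + 8*x$1*x$4*x$7^3*x$9*e1 + 24*x$1*x$4*x$7*x$8^2*x$9*e1 + 8*x$1*x$5^4*x$6*e1 + 32*x$1*x$5^3*x$6*x$7*e1 - 8*x$1*x$5^3*x$8*x$9*e1 + 48*x$1*x$5^2*x$6*x$7^2*e1 + 8*x$1*x$5^2*x$6*x$8^2*e1 - 24*x$1*x$5^2*x$7*x$8*x$9*e1 + 32*x$1*x$5*x$6*x$7^3*e1 + 16*x$1*x$5*x$6*x$7*x$8^2*e1 - 24*x$1*x$5*x$7^2*x$8*x$9*e1 - 8*x$1*x$5*x$8^3*x$9*e1 + 8*x$1*x$6*x$7^4*e1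 + 8*x$1*x$6*x$7^2*x$8^2*e1 - 8*x$1*x$7^3*x$8*x$9*e1 - 8*x$1*x$7*x$8^3*x$9*e1 - 8*x$2*x$4^3*x$5*x$6*e1 - 8*x$2*x$4^3*x$6*x$7*e1 + 8*x$2*x$4^2*x$5^2*x$9*e1 + 24*x$2*x$4^2*x$5*x$6*x$8*e1 + 16*x$2*x$4^2*x$5*x$7*x$9*e1 + 24*x$2*x$4^2*x$6*x$7*x$8*e1 + 8*x$2*x$4^2*x$7^2*x$9*e1 - 8*x$2*x$4*x$5^3*x$6*e1 - 24*x$2*x$4*x$5^2*x$6*x$7*e1 - 16*x$2*x$4*x$5^2*x$8*x$9*e1 - 24*x$2*x$4*x$5*x$6*x$7^2*e1 - 24*x$2*x$4*x$5*x$6*x$8^2*e1 - 32*x$2*x$4*x$5*x$7*x$8*x$9*e1 - 8*x$2*x$4*x$6*x$7^3*e1 - 24*x$2*x$4*x$6*x$7*x$8^2*e1 - 16*x$2*x$4*x$7^2*x$8*x$9*e1 + 8*x$2*x$5^4*x$9*e1 + 8*x$2*x$5^3*x$6*x$8*e1 + 32*x$2*x$5^3*x$7*x$9*e1 + 24*x$2*x$5^2*x$6*x$7*x$8*e1 + 48*x$2*x$5^2*x$7^2*x$9*e1 + 8*x$2*x$5^2*x$8^2*x$9*e1 + 24*x$2*x$5*x$6*x$7^2*x$8*e1 + 8*x$2*x$5*x$6*x$8^3*e1 + 32*x$2*x$5*x$7^3*x$9*e1 + 16*x$2*x$5*x$7*x$8^2*x$9*e1 + 8*x$2*x$6*x$7^3*x$8*e1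 + 8*x$2*x$6*x$7*x$8^3*e1 + 8*x$2*x$7^4*x$9*e1 + 8*x$2*x$7^2*x$8^2*x$9*e1)"


lemma bracket_certificate:
  "x1x2 x * (2 * (grad_F1_poly e0 e1 r x \<bullet> lp_field x (\<lambda>i. grad_F_poly e0 e1 r x $ i)) - L_poly e0 e1 r x)
   = bracket_cert_E e0 e1 r x * F_poly e0 e1 r x
     + (x1x2 x * bracket_cert_D e0 e1 r x + 2 * e1 * (x$5 + x$7) * bracket_cert_E e0 e1 r x)
       * (r - ((x$4)\<^sup>2 + (x$5)\<^sup>2 + (x$6)\<^sup>2 - (x$7)\<^sup>2 - (x$8)\<^sup>2 - (x$9)\<^sup>2))
     + bracket_cert_Q e0 e1 r x * (x$4 * x$7 + x$5 * x$8 + x$6 * x$9)"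
  unfolding grad_F1_poly_def grad_F_poly_def
  apply (simp only: inner_vec_def sum_9 vec_lambda_beta inner_real_def)
  apply (simp add: lp_field_def vector_def dF1_poly_def dF_poly_def axis_def)
  apply (simp only: x1x2_def bracket_cert_E_def F_poly_def bracket_cert_D_def bracket_cert_Q_def L_poly_def)
  apply algebra
  done

lemma bracket_F1_F_on_P6:
  assumes "x \<in> P6 a b" "r = a\<^sup>2 - b\<^sup>2" "x1x2 x \<noteq> 0" "F_poly e0 e1 r x = 0"
  shows "2 * (grad_F1_poly e0 e1 r x \<bullet> lp_field x (\<lambda>i. grad_F_poly e0 e1 r x $ i)) = L_poly e0 e1 r x"
proof -
  have "x1x2 x * (2 * (grad_F1_poly e0 e1 r x \<bullet> lp_field x (\<lambda>i. grad_F_poly e0 e1 r x $ i)) - L_poly e0 e1 r x) = 0"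
    unfolding bracket_certificate using assms(1,2,4) by (simp add: P6_iff)
  then show ?thesis
    using assms(3) by simp
qed

lemma M2_subset_zeros:
  assumes "s \<in> M2 a b e0 e1"
  shows "s \<in> P6 a b" "F_poly e0 e1 (a\<^sup>2 - b\<^sup>2) s = 0" "F1_poly e0 e1 (a\<^sup>2 - b\<^sup>2) s = 0"
proof -
  define r where "r = a\<^sup>2 - b\<^sup>2"
  define T where "T = {x. F_poly e0 e1 r x = 0} \<inter> {x. F1_poly e0 e1 r x = 0} \<inter> P6 a b"
  have "continuous_on UNIV (F_poly e0 e1 r)" "continuous_on UNIV (F1_poly e0 e1 r)"
    using has_derivative_F_poly has_derivative_F1_poly
    by (meson differentiableI differentiable_at_imp_differentiable_on differentiable_imp_continuous_on)+
  moreover have "closed (P6 a b)"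
  proof -
    have "P6 a b = {x. (x$4)\<^sup>2 + (x$5)\<^sup>2 + (x$6)\<^sup>2 = a\<^sup>2} \<inter> {x. (x$7)\<^sup>2 + (x$8)\<^sup>2 + (x$9)\<^sup>2 = b\<^sup>2}
        \<inter> {x. x$4 * x$7 + x$5 * x$8 + x$6 * x$9 = 0}"
      by (auto simp: P6_iff)
    then show ?thesis
      by (simp only:) (intro closed_Int closed_Collect_eq continuous_intros)
  qed
  ultimately have "closed T"
    unfolding T_def by (intro closed_Int closed_Collect_eq continuous_intros)
  moreover have "{x \<in> P6 a b. cx1 x * cx2 x \<noteq> 0 \<and> FF a b e0 e1 x = 0 \<and> FF1 a b e0 e1 x = 0} \<subseteq> T"
  proof
    fix x assume x: "x \<in> {x \<in> P6 a b. cx1 x * cx2 x \<noteq> 0 \<and> FF a b e0 e1 x = 0 \<and> FF1 a b e0 e1 x = 0}"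
    then have "x1x2 x \<noteq> 0" using cx1_mult_cx2[of x] by auto
    then show "x \<in> T"
      using x x1x2_pos FF_eq_F_poly[of x a b e0 e1] FF1_eq_F1_poly[of x a b e0 e1]
      by (auto simp: T_def r_def)
  qed
  ultimately have "s \<in> T"
    using assms closure_minimal unfolding M2_def by blast
  then show "s \<in> P6 a b" "F_poly e0 e1 (a\<^sup>2 - b\<^sup>2) s = 0" "F1_poly e0 e1 (a\<^sup>2 - b\<^sup>2) s = 0"
    by (simp_all add: T_def r_def)
qed

lemma C_Phi_Phi2_on_M2:
  assumes "a > b" "b > 0" "s \<in> M2 a b e0 e1" "x1x2 s \<noteq> 0"
  shows "C_Phi (Phi2 a b e0 e1) s
    = - 4 * (a\<^sup>2 - b\<^sup>2)\<^sup>2 * (MMr a b e0 e1 s - e1\<^sup>2) * (LLr a b e0 e1 s)\<^sup>2"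
proof -
  define r where "r = a\<^sup>2 - b\<^sup>2"
  have "b\<^sup>2 < a\<^sup>2" using assms(1,2) by (simp add: power_strict_mono)
  then have r: "r \<noteq> 0" "a\<^sup>2 - b\<^sup>2 \<noteq> 0" by (simp_all add: r_def)
  note zeros = M2_subset_zeros[OF assms(3), folded r_def]
  define K where "K = Phi2_scale r s"
  define p where "p = M_poly e0 e1 r s"
  define L where "L = L_poly e0 e1 r s"
  define \<rho> where "\<rho> = sqrt (x1x2 s)"
  have "0 < x1x2 s" using x1x2_pos[OF assms(4)] .
  then have \<rho>: "\<rho> \<noteq> 0" "\<rho> * \<rho> = x1x2 s" by (simp_all add: \<rho>_def)
  have "C_Phi (Phi2 a b e0 e1) s = - (- 2 * r * K) * (- 2 * p * K) * (L / 2)\<^sup>2"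
    using C_Phi_rank2[OF has_derivative_sgrad_Phi2_at_zero[OF r_def r(1) assms(4) zeros(2,3)]]
      bracket_F1_F_on_P6[OF zeros(1) r_def assms(4) zeros(2), symmetric]
    by (simp add: K_def p_def L_def)
  also have "\<dots> = - 4 * r\<^sup>2 * (p / (4 * r * x1x2 s)) * (L / (4 * r * x1x2 s * \<rho>))\<^sup>2"
    unfolding K_def Phi2_scale_def using \<rho> r(1) assms(4) by (simp add: field_simps power2_eq_square)
  also have "\<dots> = - 4 * (a\<^sup>2 - b\<^sup>2)\<^sup>2 * (MMr a b e0 e1 s - e1\<^sup>2) * (LLr a b e0 e1 s)\<^sup>2"
    unfolding MMr_def LLr_def MMc_eq_M_poly[OF assms(4) r(2)] LLc_eq_L_poly[OF assms(4) r(2)]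
    by (simp add: p_def L_def \<rho>_def r_def)
  finally show ?thesis .
qed

theorem theorem5:
  fixes a b e0 e1 :: real and s :: "real^9"
  assumes "a > b" and "b > 0" and "e0 \<ge> 0"
    and "s \<in> M2 a b e0 e1" and "cx1 s * cx2 s \<noteq> 0"
  shows "C_Phi (Phi2 a b e0 e1) s
           = - 4 * (a\<^sup>2 - b\<^sup>2)\<^sup>2 * (MMr a b e0 e1 s - e1\<^sup>2) * (LLr a b e0 e1 s)\<^sup>2
      \<and> ((MMr a b e0 e1 s = e1\<^sup>2 \<or> LLr a b e0 e1 s = 0) \<longrightarrow> outer_degenerate (Phi2 a b e0 e1) s)
      \<and> ((LLr a b e0 e1 s \<noteq> 0 \<and> MMr a b e0 e1 s > e1\<^sup>2) \<longrightarrow> outer_center (Phi2 a b e0 e1) s)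
      \<and> ((LLr a b e0 e1 s \<noteq> 0 \<and> MMr a b e0 e1 s < e1\<^sup>2) \<longrightarrow> outer_saddle (Phi2 a b e0 e1) s)"
proof -
  have "x1x2 s \<noteq> 0"
    using assms(5) cx1_mult_cx2[of s] by auto
  then have C: "C_Phi (Phi2 a b e0 e1) s
      = - 4 * (a\<^sup>2 - b\<^sup>2)\<^sup>2 * (MMr a b e0 e1 s - e1\<^sup>2) * (LLr a b e0 e1 s)\<^sup>2"
    using C_Phi_Phi2_on_M2 assms(1,2,4) by blast
  have "(a\<^sup>2 - b\<^sup>2)\<^sup>2 > 0"
    using assms(1,2) by (simp add: power_strict_mono)
  then have "C_Phi (Phi2 a b e0 e1) s = 0 \<longleftrightarrow> MMr a b e0 e1 s = e1\<^sup>2 \<or> LLr a b e0 e1 s = 0"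
    and "LLr a b e0 e1 s \<noteq> 0 \<Longrightarrow> C_Phi (Phi2 a b e0 e1) s < 0 \<longleftrightarrow> MMr a b e0 e1 s > e1\<^sup>2"
    and "LLr a b e0 e1 s \<noteq> 0 \<Longrightarrow> C_Phi (Phi2 a b e0 e1) s > 0 \<longleftrightarrow> MMr a b e0 e1 s < e1\<^sup>2"
    unfolding C by (auto simp: mult_less_0_iff zero_less_mult_iff)
  then show ?thesis
    using C unfolding outer_degenerate_def outer_center_def outer_saddle_def by auto
qed

end
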